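(* Let $0<c<1$. The dynamics on $\mathbb{R}^{|S|}\times\mathbb{R}^{|S|\times|A|}_{>0}$ $$\frac{dv_{s'}}{dt}=-\Big(v_{s'}-\frac1\alpha\sum_{s,a}K_{ass'}u_{sa}\Big),\ s'\in S,$$ $$\frac{du_{s\cdot}}{dt}=-\tilde u_s\big(\mathrm{diag}(\pi_{s\cdot})-c\,\pi_{s\cdot}\pi_{s\cdot}^{\mathsf T}\big)\Big(\log\frac{u_{s\cdot}}{\tilde u_s}-\frac1\tau\Big(r_{s\cdot}-\sum_{s'}K_{\cdot ss'}v_{s'}\Big)\Big),\ s\in S,$$ with $\pi_{sa}=u_{sa}/\tilde u_s$, converges to $(v^*,u^* )$ at rate $O(e^{-\kappa t})$ for some $\kappa>0$, where $(v^*,u^* )$ is the unique saddle point of $\min_v\max_u E(v,u)$.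
   Context: Finite MDP: state space $S$, action space $A$, transition probabilities $P_{ass'}$ (with $\sum_{s'}P_{ass'}=1$), rewards $r_{sa}\ge0$, discount $\gamma\in(0,1)$, regularization $\tau>0$, and $\alpha>0$. $K_{ass'}=\delta_{ss'}-\gamma P_{ass'}$, $\tilde u_s=\sum_a u_{sa}$. For fixed $s$, $u_{s\cdot},\pi_{s\cdot},r_{s\cdot}\in\mathbb{R}^{|A|}$ are the vectors indexed by $a$, $K_{\cdot ss'}\in\mathbb{R}^{|A|}$ has $a$-th entry $K_{ass'}$, logarithms and divisions of vectors are entrywise, and $\mathrm{diag}(x)$ is the diagonal matrix with diagonal $x$. $E(v,u)=\frac{\alpha}{2}\sum_s v_s^2+\sum_{s,a}u_{sa}(r_{sa}-\sum_{s'}K_{ass'}v_{s'})-\tau\sum_{s,a}u_{sa}\log(u_{sa}/\tilde u_s)$; this min-max problem has a unique saddle point $(v^*,u^* )$. *)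

theory Defs
  imports "HOL-Analysis.Analysis"
begin

text \<open>Finite MDP. States have type 's::finite, actions 'a::finite.
  P a s s' is the transition probability P_{ass'}; r s a is r_{sa};
  v :: 's => real; u s a is u_{sa}.\<close>

definition Kmat :: "real \<Rightarrow> ('a \<Rightarrow> 's \<Rightarrow> 's \<Rightarrow> real) \<Rightarrow> 'a \<Rightarrow> 's \<Rightarrow> 's \<Rightarrow> real" where
  "Kmat \<gamma> P a s s' = (if s = s' then 1 else 0) - \<gamma> * P a s s'"

definition utilde :: "('s \<Rightarrow> 'a::finite \<Rightarrow> real) \<Rightarrow> 's \<Rightarrow> real" where
  "utilde u s = (\<Sum>a\<in>UNIV. u s a)"

definition Efun ::
  "real \<Rightarrow> real \<Rightarrow> real \<Rightarrow> ('a::finite \<Rightarrow> 's::finite \<Rightarrow> 's \<Rightarrow> real) \<Rightarrow> ('s \<Rightarrow> 'a \<Rightarrow> real)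
    \<Rightarrow> ('s \<Rightarrow> real) \<Rightarrow> ('s \<Rightarrow> 'a \<Rightarrow> real) \<Rightarrow> real" where
  "Efun \<alpha> \<gamma> \<tau> P r v u =
     \<alpha> / 2 * (\<Sum>s\<in>UNIV. (v s)\<^sup>2)
     + (\<Sum>s\<in>UNIV. \<Sum>a\<in>UNIV. u s a * (r s a - (\<Sum>s'\<in>UNIV. Kmat \<gamma> P a s s' * v s')))
     - \<tau> * (\<Sum>s\<in>UNIV. \<Sum>a\<in>UNIV. u s a * ln (u s a / utilde u s))"

definition pos_u :: "('s \<Rightarrow> 'a \<Rightarrow> real) \<Rightarrow> bool" where
  "pos_u u \<longleftrightarrow> (\<forall>s a. u s a > 0)"

definition is_saddle ::
  "real \<Rightarrow> real \<Rightarrow> real \<Rightarrow> ('a::finite \<Rightarrow> 's::finite \<Rightarrow> 's \<Rightarrow> real) \<Rightarrow> ('s \<Rightarrow> 'a \<Rightarrow> real)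
    \<Rightarrow> ('s \<Rightarrow> real) \<Rightarrow> ('s \<Rightarrow> 'a \<Rightarrow> real) \<Rightarrow> bool" where
  "is_saddle \<alpha> \<gamma> \<tau> P r vs us \<longleftrightarrow> pos_u us \<and>
     (\<forall>v u. pos_u u \<longrightarrow>
        Efun \<alpha> \<gamma> \<tau> P r vs u \<le> Efun \<alpha> \<gamma> \<tau> P r vs us \<and>
        Efun \<alpha> \<gamma> \<tau> P r vs us \<le> Efun \<alpha> \<gamma> \<tau> P r v us)"

definition v_rhs ::
  "real \<Rightarrow> real \<Rightarrow> ('a::finite \<Rightarrow> 's::finite \<Rightarrow> 's \<Rightarrow> real)
    \<Rightarrow> ('s \<Rightarrow> real) \<Rightarrow> ('s \<Rightarrow> 'a \<Rightarrow> real) \<Rightarrow> 's \<Rightarrow> real" where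
  "v_rhs \<alpha> \<gamma> P v u s' =
     - (v s' - 1 / \<alpha> * (\<Sum>s\<in>UNIV. \<Sum>a\<in>UNIV. Kmat \<gamma> P a s s' * u s a))"

definition u_rhs ::
  "real \<Rightarrow> real \<Rightarrow> real \<Rightarrow> ('a::finite \<Rightarrow> 's::finite \<Rightarrow> 's \<Rightarrow> real) \<Rightarrow> ('s \<Rightarrow> 'a \<Rightarrow> real)
    \<Rightarrow> ('s \<Rightarrow> real) \<Rightarrow> ('s \<Rightarrow> 'a \<Rightarrow> real) \<Rightarrow> 's \<Rightarrow> 'a \<Rightarrow> real" where
  "u_rhs c \<gamma> \<tau> P r v u s a =
     (let ut = utilde u s;
          \<pi> = (\<lambda>b. u s b / ut);
          g = (\<lambda>b. ln (u s b / ut) - 1 / \<tau> * (r s b - (\<Sum>s'\<in>UNIV. Kmat \<gamma> P b s s' * v s')));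
          M = (\<lambda>a b. (if a = b then \<pi> a else 0) - c * \<pi> a * \<pi> b)
      in - ut * (\<Sum>b\<in>UNIV. M a b * g b))"

end

theory Submission
  imports Defs
begin

text \<open>Write e = V - v*, \<pi> = U / \<tilde>U for the policy, and KL(x | y) = x ln(x/y) - x + y. The function
  L = \<alpha>/2 |e|^2 + \<tau> (\<Sigma> KL(u*_sa | U_sa) + c/(1-c) \<Sigma> KL(\<tilde>u*_s | \<tilde>U_s))
  has derivative -\<alpha> |e|^2 - \<tau> \<Sigma> (U - u*)(ln \<pi> - ln \<pi>*) along the flow, because the first-order
  conditions of the saddle point turn the right-hand sides into errors; the second term dominates
  |\<pi> - \<pi>*|^2. Since L decreases, U stays in a compact subset of the open orthant. L alone does not
  see the mass error \<tilde>U - \<tilde>u*, but the contraction \<gamma> < 1 of the transition operator controls it by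
  z = K^T (U - u*) / \<alpha> and \<pi> - \<pi>*; subtracting a small multiple of the cross term \<langle>e, z\<rangle> yields
  W with W' \<le> -\<kappa> W and W \<ge> m (|e|^2 + |U - u*|^2), whence exponential convergence.\<close>


section \<open>Generalized Kullback-Leibler divergence\<close>

definition gen_kl :: "real \<Rightarrow> real \<Rightarrow> real" where
  "gen_kl x y = x * ln (x / y) - x + y"

lemma gen_kl_eq: "0 < x \<Longrightarrow> 0 < y \<Longrightarrow> gen_kl x y = x * (y / x - 1 - ln (y / x))"
  by (simp add: gen_kl_def ln_div field_simps)

lemma gen_kl_nonneg: "0 < x \<Longrightarrow> 0 < y \<Longrightarrow> 0 \<le> gen_kl x y"
  using ln_le_minus_one[of "y / x"] by (simp add: gen_kl_eq)

lemma gen_kl_eq_0_imp_eq: "0 < x \<Longrightarrow> 0 < y \<Longrightarrow> gen_kl x y = 0 \<Longrightarrow> x = y"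
  using ln_eq_minus_one[of "y / x"] by (simp add: gen_kl_eq)

lemma gen_kl_le_sq_div: "0 < x \<Longrightarrow> 0 < y \<Longrightarrow> gen_kl x y \<le> (x - y)\<^sup>2 / y"
  using ln_le_minus_one[of "x / y"] mult_left_mono[of "ln (x / y)" "x / y - 1" x]
  by (simp add: gen_kl_def field_simps power2_eq_square)

lemma sq_diff_le_gen_kl:
  assumes "0 < x" "0 < y" "x \<le> M" "y \<le> M"
  shows "(x - y)\<^sup>2 \<le> 4 * M * gen_kl x y"
proof -
  have "ln (sqrt y / sqrt x) \<le> sqrt y / sqrt x - 1"
    using assms by (intro ln_le_minus_one) simp
  moreover have "ln (x / y) = - 2 * ln (sqrt y / sqrt x)"
    using assms by (simp add: ln_div ln_sqrt)
  ultimately have "x * ln (x / y) \<ge> x * (2 * (1 - sqrt y / sqrt x))"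
    using assms by (intro mult_left_mono) auto
  also have "x * (2 * (1 - sqrt y / sqrt x)) = 2 * x - 2 * sqrt x * sqrt y"
    using assms by (simp add: field_simps)
  finally have hellinger: "(sqrt x - sqrt y)\<^sup>2 \<le> gen_kl x y"
    using assms by (simp add: gen_kl_def power2_eq_square algebra_simps)
  have "(sqrt x + sqrt y)\<^sup>2 \<le> 2 * ((sqrt x)\<^sup>2 + (sqrt y)\<^sup>2)"
    using sum_squares_bound[of "sqrt x" "sqrt y"] by (simp add: power2_eq_square algebra_simps)
  also have "\<dots> \<le> 4 * M"
    using assms by simp
  finally have "(sqrt x + sqrt y)\<^sup>2 \<le> 4 * M" .
  have "(x - y)\<^sup>2 = (sqrt x - sqrt y)\<^sup>2 * (sqrt x + sqrt y)\<^sup>2"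
    using assms by (simp add: power_mult_distrib[symmetric] algebra_simps)
  also have "\<dots> \<le> gen_kl x y * (4 * M)"
    using hellinger \<open>(sqrt x + sqrt y)\<^sup>2 \<le> 4 * M\<close> gen_kl_nonneg[OF assms(1,2)]
    by (intro mult_mono) auto
  finally show ?thesis
    by (simp add: mult.commute)
qed

lemma gen_kl_le_imp_le:
  assumes "0 < x" "0 < y" "gen_kl x y \<le> B"
  shows "y \<le> 2 * (B + x)"
proof -
  have "ln (y / x) = ln (y / x / 2) + ln 2"
    using assms by (simp add: ln_div ln_mult)
  hence "ln (y / x) \<le> y / x / 2"
    using ln_le_minus_one[of "y / x / 2"] ln_2_less_1 assms by simp
  hence "x * ln (y / x) \<le> y / 2"
    using assms mult_left_mono[of "ln (y / x)" "y / x / 2" x] by simp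
  moreover have "x * ln (x / y) = - (x * ln (y / x))"
    using assms by (simp add: ln_div algebra_simps)
  ultimately show ?thesis
    using assms(3) unfolding gen_kl_def by argo
qed

lemma gen_kl_le_imp_ge:
  assumes "0 < x" "0 < y" "gen_kl x y \<le> B"
  shows "x * exp (- (B + x) / x) \<le> y"
proof -
  have "ln (x / y) \<le> (B + x) / x"
    using assms by (simp add: gen_kl_def field_simps)
  hence "x / y \<le> exp ((B + x) / x)"
    using assms by (metis exp_le_cancel_iff exp_ln divide_pos_pos)
  hence "x * exp (- (B + x) / x) \<le> y * exp ((B + x) / x) * exp (- (B + x) / x)"
    using assms by (intro mult_right_mono) (auto simp: field_simps)
  thus ?thesis
    by (simp add: mult.assoc exp_add[symmetric] add_divide_distrib[symmetric])
qed

lemma has_real_derivative_gen_kl: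
  assumes "(f has_real_derivative f') (at t within S)" "0 < f t" "0 < x"
  shows "((\<lambda>t. gen_kl x (f t)) has_real_derivative (1 - x / f t) * f') (at t within S)"
proof -
  have "((\<lambda>t. x * ln (x / f t) - x + f t) has_real_derivative
      x * (1 / (x / f t) * ((0 * f t - x * f') / (f t * f t))) - 0 + f') (at t within S)"
    using assms by (intro DERIV_add DERIV_diff DERIV_cmult DERIV_const
        DERIV_chain2[OF DERIV_ln_divide] DERIV_divide) auto
  thus ?thesis
    unfolding gen_kl_def by (rule DERIV_cong) (use assms in \<open>simp add: field_simps\<close>)
qed

lemma sum_gen_kl_distributions:
  fixes x y :: "'a::finite \<Rightarrow> real"
  assumes "\<And>a. 0 < x a" "\<And>a. 0 < y a" "(\<Sum>a\<in>UNIV. x a) = 1" "(\<Sum>a\<in>UNIV. y a) = 1"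
  shows "(\<Sum>a\<in>UNIV. gen_kl (x a) (y a)) = (\<Sum>a\<in>UNIV. x a * (ln (x a) - ln (y a)))"
proof -
  have "gen_kl (x a) (y a) = x a * (ln (x a) - ln (y a)) - x a + y a" for a
    using assms(1,2)[of a] by (simp add: gen_kl_def ln_div)
  thus ?thesis
    using assms(3,4) by (simp add: sum.distrib sum_subtractf)
qed

lemma abs_ln_diff_le:
  fixes x y p :: real
  assumes "0 < p" "p \<le> x" "p \<le> y"
  shows "\<bar>ln x - ln y\<bar> \<le> \<bar>x - y\<bar> / p"
proof -
  have "ln x - ln y \<le> (x - y) / y" "ln y - ln x \<le> (y - x) / x"
    using assms ln_diff_le[of x y] ln_diff_le[of y x] by auto
  moreover have "(x - y) / y \<le> \<bar>x - y\<bar> / p" "(y - x) / x \<le> \<bar>x - y\<bar> / p"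
    using assms by (auto intro!: frac_le simp: divide_le_eq_1 order.trans[OF abs_ge_self])
  ultimately show ?thesis
    by linarith
qed

definition l1_norm :: "('i::finite \<Rightarrow> real) \<Rightarrow> real" where
  "l1_norm f = (\<Sum>i\<in>UNIV. \<bar>f i\<bar>)"

definition sq_norm :: "('i::finite \<Rightarrow> real) \<Rightarrow> real" where
  "sq_norm f = (\<Sum>i\<in>UNIV. (f i)\<^sup>2)"

lemma l1_norm_nonneg: "0 \<le> l1_norm f"
  by (simp add: l1_norm_def sum_nonneg)

lemma sq_norm_nonneg: "0 \<le> sq_norm f"
  by (simp add: sq_norm_def sum_nonneg)

lemma abs_le_l1_norm: "\<bar>f i\<bar> \<le> l1_norm f"
  unfolding l1_norm_def by (rule member_le_sum) auto

lemma sq_norm_le_l1_norm_sq: "sq_norm f \<le> (l1_norm f)\<^sup>2"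
proof -
  have "sq_norm f \<le> (\<Sum>i\<in>UNIV. \<bar>f i\<bar> * l1_norm f)"
    unfolding sq_norm_def
    by (rule sum_mono) (metis abs_ge_zero abs_le_l1_norm mult_left_mono power2_abs power2_eq_square)
  thus ?thesis
    by (simp add: l1_norm_def power2_eq_square sum_distrib_right)
qed

lemma l1_norm_sq_le: "(l1_norm f)\<^sup>2 \<le> real CARD('i) * sq_norm (f :: 'i::finite \<Rightarrow> real)"
  using Cauchy_Schwarz_ineq_sum[of "\<lambda>_. 1" "\<lambda>i. \<bar>f i\<bar>" UNIV]
  by (simp add: l1_norm_def sq_norm_def)

lemma l1_norm_case_prod: "l1_norm (case_prod f) = (\<Sum>s\<in>UNIV. \<Sum>a\<in>UNIV. \<bar>f s a\<bar>)"
  by (simp add: l1_norm_def sum.cartesian_product UNIV_Times_UNIV[symmetric] case_prod_unfold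
    del: UNIV_Times_UNIV)

lemma sq_norm_case_prod: "sq_norm (case_prod f) = (\<Sum>s\<in>UNIV. \<Sum>a\<in>UNIV. (f s a)\<^sup>2)"
  by (simp add: sq_norm_def sum.cartesian_product UNIV_Times_UNIV[symmetric] case_prod_unfold
    del: UNIV_Times_UNIV)

lemma l1_norm_sq_le_card_prod:
  fixes f :: "'s::finite \<Rightarrow> 'a::finite \<Rightarrow> real"
  shows "(l1_norm (case_prod f))\<^sup>2 \<le> real CARD('s) * real CARD('a) * sq_norm (case_prod f)"
  using l1_norm_sq_le[of "case_prod f"]
  by (simp add: UNIV_Times_UNIV[symmetric] card_cartesian_product del: UNIV_Times_UNIV)

lemma abs_inner_le_sq_norm: "\<bar>\<Sum>i\<in>UNIV. f i * g i\<bar> \<le> (sq_norm f + sq_norm g) / 2"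
proof -
  have "\<bar>f i * g i\<bar> \<le> ((f i)\<^sup>2 + (g i)\<^sup>2) / 2" for i
    using sum_squares_bound[of "\<bar>f i\<bar>" "\<bar>g i\<bar>"] by (simp add: abs_mult)
  hence "\<bar>\<Sum>i\<in>UNIV. f i * g i\<bar> \<le> (\<Sum>i\<in>UNIV. ((f i)\<^sup>2 + (g i)\<^sup>2) / 2)"
    by (intro order_trans[OF sum_abs sum_mono])
  thus ?thesis
    by (simp add: sq_norm_def sum.distrib sum_divide_distrib[symmetric])
qed

lemma young_mixed_le:
  fixes x y E D p \<tau> n :: real
  assumes "0 < p" "0 < \<tau>" "0 \<le> E" "0 \<le> D" "x\<^sup>2 \<le> n * E" "y\<^sup>2 \<le> n * D"
  shows "x * y / p + x\<^sup>2 / \<tau> \<le> n * (1 / (2 * p) + 1 / \<tau>) * (E + D)"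
proof -
  have "0 \<le> n * D"
    using assms(6) by (metis order_trans zero_le_power2)
  hence "x * y \<le> n * (E + D) / 2"
    using sum_squares_bound[of x y] assms(5,6) by (simp add: algebra_simps)
  hence "x * y / p \<le> n * (E + D) / 2 / p"
    using assms(1) by (intro divide_right_mono) auto
  moreover have "x\<^sup>2 / \<tau> \<le> n * (E + D) / \<tau>"
    using \<open>0 \<le> n * D\<close> assms(2,5) by (intro divide_right_mono) (auto simp: algebra_simps)
  ultimately show ?thesis
    by (simp add: algebra_simps add_divide_distrib)
qed

section \<open>Lyapunov estimates\<close>

lemma nonincreasing_if_deriv_nonpos:
  fixes f f' :: "real \<Rightarrow> real"
  assumes "\<And>t. t \<ge> 0 \<Longrightarrow> (f has_real_derivative f' t) (at t within {0..})"
    and "\<And>t. t \<ge> 0 \<Longrightarrow> f' t \<le> 0" and "t \<ge> 0"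
  shows "f t \<le> f 0"
proof (rule DERIV_nonpos_imp_decreasing_open[OF \<open>t \<ge> 0\<close>])
  fix x assume "0 < x" "x < t"
  hence "at x within {0..} = at x"
    by (intro at_within_interior) auto
  thus "\<exists>y. (f has_real_derivative y) (at x) \<and> y \<le> 0"
    using assms(1,2)[of x] \<open>0 < x\<close> by auto
next
  have "continuous_on {0..} f"
    using assms(1) by (auto simp: continuous_on_eq_continuous_within intro: DERIV_continuous)
  thus "continuous_on {0..t} f"
    by (rule continuous_on_subset) auto
qed

lemma exp_decay_if_deriv_le:
  fixes W W' :: "real \<Rightarrow> real"
  assumes "\<And>t. t \<ge> 0 \<Longrightarrow> (W has_real_derivative W' t) (at t within {0..})"
    and "\<And>t. t \<ge> 0 \<Longrightarrow> W' t \<le> - \<kappa> * W t" and "t \<ge> 0"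
  shows "W t \<le> W 0 * exp (- \<kappa> * t)"
proof -
  have "W t * exp (\<kappa> * t) \<le> W 0 * exp (\<kappa> * 0)"
  proof (rule nonincreasing_if_deriv_nonpos[where f = "\<lambda>t. W t * exp (\<kappa> * t)"])
    fix t :: real assume "t \<ge> 0"
    show "((\<lambda>t. W t * exp (\<kappa> * t)) has_real_derivative (W' t + \<kappa> * W t) * exp (\<kappa> * t))
        (at t within {0..})"
      by (rule derivative_eq_intros assms(1) \<open>t \<ge> 0\<close> refl | simp add: algebra_simps)+
    show "(W' t + \<kappa> * W t) * exp (\<kappa> * t) \<le> 0"
      using assms(2)[OF \<open>t \<ge> 0\<close>] by (simp add: mult_nonpos_nonneg)
  qed (rule assms(3))
  hence "W t * exp (\<kappa> * t) * exp (- \<kappa> * t) \<le> W 0 * exp (- \<kappa> * t)"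
    by (intro mult_right_mono) auto
  thus ?thesis
    by (simp add: mult.assoc exp_add[symmetric])
qed

text \<open>In the following lemmas E, D, Z and U stand for squared errors, L' for the derivative of a
  Lyapunov function L that only dissipates E and D, and \<Psi>' for the derivative of a cross term \<Psi>.
  If U is controlled by Z and D, then L - \<epsilon> \<Psi> decays exponentially for small \<epsilon>.\<close>

lemma cross_term_deriv_le:
  fixes \<alpha> \<beta> A \<epsilon> E D Z L' \<Psi> \<Psi>' :: real
  assumes "\<epsilon> > 0" "\<epsilon> * (1 + 2 * A) \<le> \<alpha>" "\<epsilon> * (1 + 2 * A) \<le> \<beta>" "0 \<le> E" "0 \<le> D"
    and "L' \<le> - \<alpha> * E - \<beta> * D" "\<Psi>' \<ge> - \<Psi> + Z - A * (E + D)" "\<bar>\<Psi>\<bar> \<le> (E + Z) / 2"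
  shows "L' - \<epsilon> * \<Psi>' \<le> - \<alpha> / 2 * E - \<beta> / 2 * D - \<epsilon> / 2 * Z"
proof -
  have "\<epsilon> * (- \<Psi> + Z - A * (E + D)) \<le> \<epsilon> * \<Psi>'"
    using assms(1,7) by (intro mult_left_mono) auto
  moreover have "\<epsilon> * \<Psi> \<le> \<epsilon> * ((E + Z) / 2)"
    using assms(1,8) by (intro mult_left_mono) auto
  moreover have "\<epsilon> * (1 + 2 * A) * E \<le> \<alpha> * E" "\<epsilon> * (1 + 2 * A) * D \<le> \<beta> * D" "0 \<le> \<epsilon> * D"
    using assms(1-5) by (auto intro: mult_right_mono)
  ultimately show ?thesis
    using assms(6) by (simp add: algebra_simps)
qed

lemma cross_term_dissipation:
  fixes \<alpha> \<beta> A C \<epsilon> E D Z U L' \<Psi> \<Psi>' :: real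
  assumes "\<epsilon> > 0" "\<epsilon> * (1 + 2 * A) \<le> \<alpha>" "\<epsilon> * (1 + 2 * A) \<le> \<beta>" "0 \<le> A" "C > 0"
    and "0 \<le> E" "0 \<le> D" "0 \<le> Z" "0 \<le> U"
    and "L' \<le> - \<alpha> * E - \<beta> * D" "\<Psi>' \<ge> - \<Psi> + Z - A * (E + D)" "\<bar>\<Psi>\<bar> \<le> (E + Z) / 2"
    and U: "U \<le> C * (Z + D)"
  shows "L' - \<epsilon> * \<Psi>' \<le> - min (\<alpha> / 2) (min \<beta> \<epsilon> / (2 * C)) * (E + U)"
proof -
  define \<mu> where "\<mu> = min (\<alpha> / 2) (min \<beta> \<epsilon> / (2 * C))"
  have "L' - \<epsilon> * \<Psi>' \<le> - \<alpha> / 2 * E - \<beta> / 2 * D - \<epsilon> / 2 * Z"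
    using assms(1-3,6,7,10-12) by (rule cross_term_deriv_le)
  moreover have "\<mu> * E \<le> \<alpha> / 2 * E"
    unfolding \<mu>_def by (rule mult_right_mono[OF min.cobounded1 \<open>0 \<le> E\<close>])
  moreover have "min \<beta> \<epsilon> * D \<le> \<beta> * D" "min \<beta> \<epsilon> * Z \<le> \<epsilon> * Z"
    by (rule mult_right_mono[OF min.cobounded1 \<open>0 \<le> D\<close>],
        rule mult_right_mono[OF min.cobounded2 \<open>0 \<le> Z\<close>])
  moreover have "\<epsilon> * 1 \<le> \<epsilon> * (1 + 2 * A)"
    using assms(1,4) by (intro mult_left_mono) auto
  hence "0 < \<beta>"
    using assms(1,3) by linarith
  hence "\<mu> * U \<le> min \<beta> \<epsilon> / (2 * C) * (C * (Z + D))"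
    using assms(1,5,9) U unfolding \<mu>_def by (intro mult_mono) auto
  hence "\<mu> * U \<le> min \<beta> \<epsilon> / 2 * (Z + D)"
    using \<open>C > 0\<close> by simp
  ultimately show ?thesis
    unfolding \<mu>_def[symmetric] by (simp add: algebra_simps)
qed

lemma cross_term_upper_bound:
  fixes \<alpha> B hi \<epsilon> E Z U L \<Psi> :: real
  assumes "0 < \<epsilon>" "0 \<le> \<alpha>" "0 \<le> B" "0 \<le> hi" "0 \<le> E" "0 \<le> U"
    and "\<bar>\<Psi>\<bar> \<le> (E + Z) / 2" "Z \<le> B * U" "L \<le> \<alpha> / 2 * E + hi * U"
  shows "L - \<epsilon> * \<Psi> \<le> (\<alpha> + hi + \<epsilon> * B + \<epsilon>) * (E + U)"
proof -
  have "\<epsilon> * (- \<Psi>) \<le> \<epsilon> * ((E + Z) / 2)" "\<epsilon> * Z \<le> \<epsilon> * (B * U)"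
    using mult_left_mono[of "- \<Psi>" "(E + Z) / 2" \<epsilon>] mult_left_mono[OF assms(8), of \<epsilon>] assms(1,7)
    by (auto simp: abs_le_iff)
  moreover have "0 \<le> hi * E" "0 \<le> \<epsilon> * B * E" "0 \<le> \<alpha> * U" "0 \<le> \<epsilon> * U" "0 \<le> \<epsilon> * E"
      "0 \<le> \<epsilon> * B * U" "0 \<le> \<alpha> * E"
    using assms(1-6) by auto
  ultimately show ?thesis
    using assms(9) by (simp add: algebra_simps)
qed

lemma cross_term_lower_bound:
  fixes \<alpha> B lo \<epsilon> E Z U L \<Psi> :: real
  assumes "0 < \<epsilon>" "\<epsilon> \<le> \<alpha> / 2" "\<epsilon> * (B + 1) \<le> lo" "0 \<le> E" "0 \<le> U"
    and "\<bar>\<Psi>\<bar> \<le> (E + Z) / 2" "Z \<le> B * U" "\<alpha> / 2 * E + lo * U \<le> L"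
  shows "min (\<alpha> / 4) (lo / 2) * (E + U) \<le> L - \<epsilon> * \<Psi>"
proof -
  have "\<epsilon> * \<Psi> \<le> \<epsilon> * ((E + Z) / 2)" "\<epsilon> * Z \<le> \<epsilon> * (B * U)" "0 \<le> \<epsilon> * U"
    using assms(1,5-7) by (auto intro!: mult_left_mono simp: abs_le_iff)
  moreover have "\<epsilon> * E \<le> \<alpha> / 2 * E" "\<epsilon> * (B + 1) * U \<le> lo * U"
    by (rule mult_right_mono[OF assms(2,4)], rule mult_right_mono[OF assms(3,5)])
  moreover have "min (\<alpha> / 4) (lo / 2) * E \<le> \<alpha> / 4 * E" "min (\<alpha> / 4) (lo / 2) * U \<le> lo / 2 * U"
    by (rule mult_right_mono[OF min.cobounded1 assms(4)], rule mult_right_mono[OF min.cobounded2 assms(5)])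
  ultimately show ?thesis
    using assms(8) by (simp add: algebra_simps)
qed

lemma cross_term_lyapunov:
  fixes \<alpha> \<beta> A B C lo hi :: real
  assumes "\<alpha> > 0" "\<beta> > 0" "A \<ge> 0" "B \<ge> 0" "C > 0" "lo > 0" "hi \<ge> 0"
  obtains \<epsilon> \<kappa> m where "\<epsilon> > 0" "\<kappa> > 0" "m > 0"
    and "\<And>E D Z U L L' \<Psi> \<Psi>'. 0 \<le> E \<Longrightarrow> 0 \<le> D \<Longrightarrow> 0 \<le> Z \<Longrightarrow> 0 \<le> U \<Longrightarrow>
      L' \<le> - \<alpha> * E - \<beta> * D \<Longrightarrow> \<Psi>' \<ge> - \<Psi> + Z - A * (E + D) \<Longrightarrow> \<bar>\<Psi>\<bar> \<le> (E + Z) / 2 \<Longrightarrow>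
      Z \<le> B * U \<Longrightarrow> U \<le> C * (Z + D) \<Longrightarrow> \<alpha> / 2 * E + lo * U \<le> L \<Longrightarrow> L \<le> \<alpha> / 2 * E + hi * U \<Longrightarrow>
      L' - \<epsilon> * \<Psi>' \<le> - \<kappa> * (L - \<epsilon> * \<Psi>) \<and> m * (E + U) \<le> L - \<epsilon> * \<Psi>"
proof -
  define \<epsilon> where "\<epsilon> = min (min \<alpha> \<beta> / (1 + 2 * A)) (min (\<alpha> / 2) (lo / (B + 1)))"
  define \<mu> where "\<mu> = min (\<alpha> / 2) (min \<beta> \<epsilon> / (2 * C))"
  define H where "H = \<alpha> + hi + \<epsilon> * B + \<epsilon>"
  have "\<epsilon> > 0"
    using assms by (simp add: \<epsilon>_def)
  have "\<epsilon> \<le> min \<alpha> \<beta> / (1 + 2 * A)" "\<epsilon> \<le> \<alpha> / 2" "\<epsilon> \<le> lo / (B + 1)"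
    unfolding \<epsilon>_def by (rule min.cobounded1, (rule min.coboundedI2, rule min.cobounded1),
        (rule min.coboundedI2, rule min.cobounded2))
  hence \<epsilon>_le: "\<epsilon> * (1 + 2 * A) \<le> \<alpha>" "\<epsilon> * (1 + 2 * A) \<le> \<beta>" "\<epsilon> * (B + 1) \<le> lo"
    using assms by (simp_all add: pos_le_divide_eq)
  have "\<mu> > 0" "H > 0"
    using \<open>\<epsilon> > 0\<close> assms by (auto simp: \<mu>_def H_def add_pos_nonneg)
  show ?thesis
  proof (rule that[of \<epsilon> "\<mu> / H" "min (\<alpha> / 4) (lo / 2)"])
    fix E D Z U L L' \<Psi> \<Psi>' :: real
    assume "0 \<le> E" "0 \<le> D" "0 \<le> Z" "0 \<le> U" "L' \<le> - \<alpha> * E - \<beta> * D"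
      "\<Psi>' \<ge> - \<Psi> + Z - A * (E + D)" "\<bar>\<Psi>\<bar> \<le> (E + Z) / 2" "Z \<le> B * U" "U \<le> C * (Z + D)"
      "\<alpha> / 2 * E + lo * U \<le> L" "L \<le> \<alpha> / 2 * E + hi * U"
    note hyps = this
    have "L' - \<epsilon> * \<Psi>' \<le> - \<mu> * (E + U)"
      unfolding \<mu>_def using \<open>\<epsilon> > 0\<close> \<epsilon>_le(1,2) \<open>A \<ge> 0\<close> \<open>C > 0\<close> hyps(1-7,9)
      by (rule cross_term_dissipation)
    also have "\<dots> \<le> - (\<mu> / H) * (L - \<epsilon> * \<Psi>)"
    proof -
      have "L - \<epsilon> * \<Psi> \<le> H * (E + U)"
        unfolding H_def using \<open>\<epsilon> > 0\<close> assms(1,4,7) hyps(1,4,7,8,11) by (intro cross_term_upper_bound) auto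
      hence "(L - \<epsilon> * \<Psi>) / H \<le> E + U"
        using \<open>H > 0\<close> by (simp add: pos_divide_le_eq mult.commute)
      hence "\<mu> * ((L - \<epsilon> * \<Psi>) / H) \<le> \<mu> * (E + U)"
        using \<open>\<mu> > 0\<close> by (intro mult_left_mono) auto
      thus ?thesis
        by simp
    qed
    finally show "L' - \<epsilon> * \<Psi>' \<le> - (\<mu> / H) * (L - \<epsilon> * \<Psi>) \<and> min (\<alpha> / 4) (lo / 2) * (E + U) \<le> L - \<epsilon> * \<Psi>"
      using cross_term_lower_bound[OF \<open>\<epsilon> > 0\<close> \<open>\<epsilon> \<le> \<alpha> / 2\<close> \<epsilon>_le(3) hyps(1,4,7,8,10)] by blast
  qed (use \<open>\<epsilon> > 0\<close> \<open>\<mu> > 0\<close> \<open>H > 0\<close> assms in auto)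
qed

section \<open>First-order conditions at the saddle point\<close>

definition ent_reward :: "real \<Rightarrow> ('a::finite \<Rightarrow> real) \<Rightarrow> ('a \<Rightarrow> real) \<Rightarrow> real" where
  "ent_reward \<tau> q w = (\<Sum>a\<in>UNIV. w a * q a) - \<tau> * (\<Sum>a\<in>UNIV. w a * ln (w a / (\<Sum>b\<in>UNIV. w b)))"

lemma ent_reward_scale:
  assumes "l > 0"
  shows "ent_reward \<tau> q (\<lambda>a. l * w a) = l * ent_reward \<tau> q w"
proof -
  have "l * w a / (\<Sum>b\<in>UNIV. l * w b) = w a / (\<Sum>b\<in>UNIV. w b)" for a
    using assms by (simp add: sum_distrib_left[symmetric])
  thus ?thesis
    unfolding ent_reward_def by (simp add: sum_distrib_left algebra_simps)
qed

lemma ent_reward_max_eq_0: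
  assumes "\<And>a. 0 < w0 a" and max: "\<And>w. (\<And>a. 0 < w a) \<Longrightarrow> ent_reward \<tau> q w \<le> ent_reward \<tau> q w0"
  shows "ent_reward \<tau> q w0 = 0"
proof -
  have "l * ent_reward \<tau> q w0 \<le> ent_reward \<tau> q w0" if "l > 0" for l
    using max[of "\<lambda>a. l * w0 a"] ent_reward_scale[OF that, of \<tau> q w0] assms(1) that by simp
  from this[of 2] this[of "1/2"] show ?thesis
    by linarith
qed

lemma ent_reward_eq_softmax:
  fixes q w :: "'a::finite \<Rightarrow> real" and \<tau> :: real
  defines "Z \<equiv> \<Sum>a\<in>UNIV. exp (q a / \<tau>)"
  assumes "\<tau> > 0" "\<And>a. 0 < w a"
  shows "ent_reward \<tau> q w = \<tau> * (\<Sum>a\<in>UNIV. w a) *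
    (ln Z - (\<Sum>a\<in>UNIV. gen_kl (w a / (\<Sum>b\<in>UNIV. w b)) (exp (q a / \<tau>) / Z)))"
proof -
  define W where "W = (\<Sum>b\<in>UNIV. w b)"
  have "W > 0" "Z > 0"
    using assms by (auto simp: W_def Z_def intro: sum_pos)
  have "(\<Sum>a\<in>UNIV. gen_kl (w a / W) (exp (q a / \<tau>) / Z))
      = (\<Sum>a\<in>UNIV. w a / W * (ln (w a / W) - (q a / \<tau> - ln Z)))"
    using \<open>W > 0\<close> \<open>Z > 0\<close> assms
    by (subst sum_gen_kl_distributions)
       (auto simp: ln_div W_def Z_def sum_divide_distrib[symmetric])
  also have "\<dots> = (\<Sum>a\<in>UNIV. w a * ln (w a / W)) / W - (\<Sum>a\<in>UNIV. w a * q a) / (\<tau> * W) + ln Z"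
    using \<open>W > 0\<close> \<open>\<tau> > 0\<close>
    by (simp add: algebra_simps sum_subtractf sum.distrib sum_divide_distrib[symmetric]
        flip: sum_distrib_right) (simp add: W_def field_simps sum_distrib_left)
  finally show ?thesis
    using \<open>W > 0\<close> \<open>\<tau> > 0\<close> by (simp add: ent_reward_def W_def[symmetric] field_simps)
qed

lemma ent_reward_softmax:
  fixes q :: "'a::finite \<Rightarrow> real" and \<tau> :: real
  defines "Z \<equiv> \<Sum>a\<in>UNIV. exp (q a / \<tau>)"
  assumes "\<tau> > 0"
  shows "ent_reward \<tau> q (\<lambda>a. exp (q a / \<tau>) / Z) = \<tau> * ln Z"
proof -
  have "Z > 0"
    by (simp add: Z_def sum_pos)
  hence "(\<Sum>a\<in>UNIV. exp (q a / \<tau>) / Z) = 1"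
    by (simp add: Z_def sum_divide_distrib[symmetric])
  moreover have "ent_reward \<tau> q (\<lambda>a. exp (q a / \<tau>) / Z) = \<tau> * (\<Sum>a\<in>UNIV. exp (q a / \<tau>) / Z) *
      (ln Z - (\<Sum>a\<in>UNIV. gen_kl (exp (q a / \<tau>) / Z / (\<Sum>b\<in>UNIV. exp (q b / \<tau>) / Z)) (exp (q a / \<tau>) / Z)))"
    unfolding Z_def using \<open>Z > 0\<close> assms(2) by (intro ent_reward_eq_softmax) (auto simp: Z_def)
  ultimately show ?thesis
    using \<open>Z > 0\<close> by (simp add: gen_kl_def)
qed

lemma ent_reward_maximizer:
  fixes q w0 :: "'a::finite \<Rightarrow> real"
  assumes "\<tau> > 0" "\<And>a. 0 < w0 a"
    and max: "\<And>w. (\<And>a. 0 < w a) \<Longrightarrow> ent_reward \<tau> q w \<le> ent_reward \<tau> q w0"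
  shows "\<tau> * ln (w0 a / (\<Sum>b\<in>UNIV. w0 b)) = q a"
proof -
  define Z where "Z = (\<Sum>a\<in>UNIV. exp (q a / \<tau>))"
  define p where "p a = exp (q a / \<tau>) / Z" for a
  define W0 where "W0 = (\<Sum>b\<in>UNIV. w0 b)"
  define S where "S = (\<Sum>a\<in>UNIV. gen_kl (w0 a / W0) (p a))"
  have "Z > 0" "W0 > 0"
    using assms by (auto simp: Z_def W0_def intro: sum_pos)
  hence "\<And>a. p a > 0"
    by (simp add: p_def)
  have "\<tau> * ln Z = ent_reward \<tau> q p"
    unfolding p_def[abs_def] Z_def by (rule ent_reward_softmax[symmetric]) fact
  also have "\<dots> \<le> ent_reward \<tau> q w0"
    by (rule max) fact
  finally have "ln Z \<le> 0"
    using ent_reward_max_eq_0[OF assms(2) max] \<open>\<tau> > 0\<close> by (simp add: mult_le_0_iff)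
  have gen_kl_nonneg': "0 \<le> gen_kl (w0 a / W0) (p a)" for a
    using assms(2) \<open>W0 > 0\<close> \<open>\<And>a. p a > 0\<close> by (intro gen_kl_nonneg) auto
  have "ent_reward \<tau> q w0 = \<tau> * W0 * (ln Z - S)"
    unfolding S_def p_def W0_def Z_def by (rule ent_reward_eq_softmax) fact+
  hence "S = ln Z"
    using ent_reward_max_eq_0[OF assms(2) max] \<open>\<tau> > 0\<close> \<open>W0 > 0\<close> by simp
  moreover have "0 \<le> S"
    unfolding S_def by (intro sum_nonneg gen_kl_nonneg')
  ultimately have "S = 0" "ln Z = 0"
    using \<open>ln Z \<le> 0\<close> by auto
  hence "gen_kl (w0 a / W0) (p a) = 0"
    using sum_nonneg_eq_0_iff[of UNIV "\<lambda>a. gen_kl (w0 a / W0) (p a)"] gen_kl_nonneg'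
    by (simp add: S_def)
  hence "w0 a / W0 = p a"
    using gen_kl_eq_0_imp_eq[of "w0 a / W0" "p a"] assms(2)[of a] \<open>W0 > 0\<close> \<open>\<And>a. p a > 0\<close>
    by simp
  moreover have "ln (p a) = q a / \<tau>"
    using \<open>ln Z = 0\<close> \<open>Z > 0\<close> by (simp add: p_def ln_div)
  ultimately show ?thesis
    using \<open>\<tau> > 0\<close> by (simp add: W0_def)
qed

lemma quadratic_argmin:
  fixes b v0 :: "'i::finite \<Rightarrow> real"
  assumes "\<alpha> > 0"
    and min: "\<And>v. \<alpha> / 2 * sq_norm v0 - (\<Sum>i\<in>UNIV. b i * v0 i) \<le> \<alpha> / 2 * sq_norm v - (\<Sum>i\<in>UNIV. b i * v i)"
  shows "\<alpha> * v0 i = b i"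
proof -
  have "\<alpha> / 2 * (v i)\<^sup>2 - b i * v i = \<alpha> / 2 * (v i - b i / \<alpha>)\<^sup>2 - (b i)\<^sup>2 / (2 * \<alpha>)" for v i
    using \<open>\<alpha> > 0\<close> by (simp add: field_simps power2_eq_square)
  hence square: "\<alpha> / 2 * sq_norm v - (\<Sum>i\<in>UNIV. b i * v i)
      = \<alpha> / 2 * sq_norm (\<lambda>i. v i - b i / \<alpha>) - (\<Sum>i\<in>UNIV. (b i)\<^sup>2) / (2 * \<alpha>)" for v
    by (simp add: sq_norm_def sum_distrib_left sum_divide_distrib sum_subtractf[symmetric])
  have "\<alpha> / 2 * sq_norm (\<lambda>i. v0 i - b i / \<alpha>) \<le> 0"
    using min[of "\<lambda>i. b i / \<alpha>"] unfolding square by (simp add: sq_norm_def)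
  hence "sq_norm (\<lambda>i. v0 i - b i / \<alpha>) \<le> 0"
    using \<open>\<alpha> > 0\<close> by (simp add: mult_le_0_iff)
  hence "(v0 i - b i / \<alpha>)\<^sup>2 = 0"
    using sum_nonneg_eq_0_iff[of UNIV "\<lambda>i. (v0 i - b i / \<alpha>)\<^sup>2"] sq_norm_nonneg[of "\<lambda>i. v0 i - b i / \<alpha>"]
    by (simp add: sq_norm_def)
  thus ?thesis
    using \<open>\<alpha> > 0\<close> by (simp add: field_simps)
qed

definition Kmat_transp ::
  "real \<Rightarrow> ('a::finite \<Rightarrow> 's::finite \<Rightarrow> 's \<Rightarrow> real) \<Rightarrow> ('s \<Rightarrow> 'a \<Rightarrow> real) \<Rightarrow> 's \<Rightarrow> real" where
  "Kmat_transp \<gamma> P u s' = (\<Sum>s\<in>UNIV. \<Sum>a\<in>UNIV. Kmat \<gamma> P a s s' * u s a)"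

lemma sum_Kmat_transp_mult:
  "(\<Sum>s'\<in>UNIV. Kmat_transp \<gamma> P u s' * v s')
    = (\<Sum>s\<in>UNIV. \<Sum>a\<in>UNIV. u s a * (\<Sum>s'\<in>UNIV. Kmat \<gamma> P a s s' * v s'))"
proof -
  have "(\<Sum>s'\<in>UNIV. Kmat_transp \<gamma> P u s' * v s')
      = (\<Sum>s'\<in>UNIV. \<Sum>s\<in>UNIV. \<Sum>a\<in>UNIV. u s a * (Kmat \<gamma> P a s s' * v s'))"
    by (simp add: Kmat_transp_def sum_distrib_left sum_distrib_right mult_ac)
  also have "\<dots> = (\<Sum>s\<in>UNIV. \<Sum>a\<in>UNIV. \<Sum>s'\<in>UNIV. u s a * (Kmat \<gamma> P a s s' * v s'))"
    by (subst sum.swap) (rule sum.cong[OF refl sum.swap])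
  finally show ?thesis
    by (simp add: sum_distrib_left)
qed

lemma Efun_eq_quadratic:
  "Efun \<alpha> \<gamma> \<tau> P r v u
    = \<alpha> / 2 * sq_norm v - (\<Sum>s\<in>UNIV. Kmat_transp \<gamma> P u s * v s) + Efun \<alpha> \<gamma> \<tau> P r (\<lambda>_. 0) u"
  by (simp add: Efun_def sq_norm_def sum_Kmat_transp_mult right_diff_distrib sum_subtractf)

lemma Efun_eq_sum_ent_reward:
  "Efun \<alpha> \<gamma> \<tau> P r v u = \<alpha> / 2 * sq_norm v
    + (\<Sum>s\<in>UNIV. ent_reward \<tau> (\<lambda>a. r s a - (\<Sum>s'\<in>UNIV. Kmat \<gamma> P a s s' * v s')) (u s))"
  by (simp add: Efun_def sq_norm_def ent_reward_def utilde_def sum_subtractf sum_distrib_left)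

definition policy :: "('s \<Rightarrow> 'a::finite \<Rightarrow> real) \<Rightarrow> 's \<Rightarrow> 'a \<Rightarrow> real" where
  "policy u s a = u s a / utilde u s"

lemma utilde_pos: "pos_u u \<Longrightarrow> 0 < utilde u s"
  unfolding pos_u_def utilde_def by (intro sum_pos) auto

lemma policy_pos: "pos_u u \<Longrightarrow> 0 < policy u s a"
  using utilde_pos[of u s] by (simp add: policy_def pos_u_def)

lemma sum_policy: "pos_u u \<Longrightarrow> (\<Sum>a\<in>UNIV. policy u s a) = 1"
  using utilde_pos[of u s] by (simp add: policy_def sum_divide_distrib[symmetric] utilde_def)

lemma policy_le_one: "pos_u u \<Longrightarrow> policy u s a \<le> 1"
  using member_le_sum[of a UNIV "policy u s"] policy_pos[of u s] sum_policy[of u s]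
  by (simp add: less_imp_le)

lemma utilde_mult_policy: "pos_u u \<Longrightarrow> utilde u s * policy u s a = u s a"
  using utilde_pos[of u s] by (simp add: policy_def)

lemma utilde_le_card_mult:
  fixes u :: "'s \<Rightarrow> 'a::finite \<Rightarrow> real"
  shows "(\<And>a. u s a \<le> M) \<Longrightarrow> utilde u s \<le> real CARD('a) * M"
  unfolding utilde_def using sum_mono[of UNIV "u s" "\<lambda>_. M"] by simp

lemma le_utilde: "pos_u u \<Longrightarrow> u s a \<le> utilde u s"
  unfolding utilde_def pos_u_def by (rule member_le_sum) (auto intro: less_imp_le)

lemma policy_ge:
  fixes u :: "'s \<Rightarrow> 'a::finite \<Rightarrow> real"
  assumes "pos_u u" "0 < m" "\<And>a. m \<le> u s a" "\<And>a. u s a \<le> M"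
  shows "m / (real CARD('a) * M) \<le> policy u s a"
  unfolding policy_def
  using assms(2) assms(3)[of a] assms(4) utilde_pos[OF assms(1), of s] utilde_le_card_mult[of u s M]
  by (intro frac_le) auto

locale mdp_saddle =
  fixes P :: "'a::finite \<Rightarrow> 's::finite \<Rightarrow> 's \<Rightarrow> real"
    and r :: "'s \<Rightarrow> 'a \<Rightarrow> real"
    and \<gamma> \<tau> \<alpha> :: real
    and vs :: "'s \<Rightarrow> real" and us :: "'s \<Rightarrow> 'a \<Rightarrow> real"
  assumes P_nonneg: "\<And>a s s'. P a s s' \<ge> 0"
    and P_stoch: "\<And>a s. (\<Sum>s'\<in>UNIV. P a s s') = 1"
    and gamma: "0 \<le> \<gamma>" "\<gamma> < 1"
    and tau: "\<tau> > 0"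
    and alpha: "\<alpha> > 0"
    and saddle: "is_saddle \<alpha> \<gamma> \<tau> P r vs us"
begin

abbreviation K where "K \<equiv> Kmat \<gamma> P"

lemma abs_K_le_one: "\<bar>K a s s'\<bar> \<le> 1"
proof -
  have "P a s s' \<le> 1"
    using member_le_sum[of s' UNIV "P a s"] P_nonneg P_stoch by simp
  hence "\<gamma> * P a s s' \<le> 1"
    using gamma P_nonneg[of a s s'] by (intro mult_le_one) auto
  moreover have "0 \<le> \<gamma> * P a s s'"
    using gamma P_nonneg[of a s s'] by simp
  ultimately show ?thesis
    unfolding Kmat_def by auto
qed

lemma us_pos: "pos_u us"
  using saddle unfolding is_saddle_def by simp

lemma us_gt_0: "0 < us s a"
  using us_pos by (simp add: pos_u_def)

lemma alpha_vs_eq: "\<alpha> * vs s = Kmat_transp \<gamma> P us s"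
proof (rule quadratic_argmin[OF alpha])
  fix v
  have "Efun \<alpha> \<gamma> \<tau> P r vs us \<le> Efun \<alpha> \<gamma> \<tau> P r v us"
    using saddle us_pos unfolding is_saddle_def by blast
  thus "\<alpha> / 2 * sq_norm vs - (\<Sum>s\<in>UNIV. Kmat_transp \<gamma> P us s * vs s)
      \<le> \<alpha> / 2 * sq_norm v - (\<Sum>s\<in>UNIV. Kmat_transp \<gamma> P us s * v s)"
    by (subst (asm) (1 2) Efun_eq_quadratic) simp
qed

lemma tau_ln_policy_eq: "\<tau> * ln (policy us s a) = r s a - (\<Sum>s'\<in>UNIV. K a s s' * vs s')"
proof -
  define q where "q s = (\<lambda>a. r s a - (\<Sum>s'\<in>UNIV. K a s s' * vs s'))" for s
  have max_row: "ent_reward \<tau> (q s) w \<le> ent_reward \<tau> (q s) (us s)" if "\<And>a. 0 < w a" for w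
  proof -
    have "pos_u (us(s := w))"
      using us_pos that by (simp add: pos_u_def)
    hence "Efun \<alpha> \<gamma> \<tau> P r vs (us(s := w)) \<le> Efun \<alpha> \<gamma> \<tau> P r vs us"
      using saddle unfolding is_saddle_def by blast
    moreover have "(\<Sum>s'\<in>UNIV. ent_reward \<tau> (q s') ((us(s := w)) s'))
        = ent_reward \<tau> (q s) w + (\<Sum>s'\<in>UNIV - {s}. ent_reward \<tau> (q s') (us s'))"
      by (subst sum.remove[of UNIV s]) (auto intro!: sum.cong)
    moreover have "(\<Sum>s'\<in>UNIV. ent_reward \<tau> (q s') (us s'))
        = ent_reward \<tau> (q s) (us s) + (\<Sum>s'\<in>UNIV - {s}. ent_reward \<tau> (q s') (us s'))"
      by (rule sum.remove) auto
    ultimately show ?thesis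
      by (simp add: Efun_eq_sum_ent_reward q_def)
  qed
  have "\<tau> * ln (us s a / (\<Sum>b\<in>UNIV. us s b)) = q s a"
    by (rule ent_reward_maximizer[OF tau _ max_row]) (use us_pos in \<open>simp add: pos_u_def\<close>)
  thus ?thesis
    by (simp add: q_def policy_def utilde_def)
qed

lemma sum_P_policy: "(\<Sum>s'\<in>UNIV. \<Sum>a\<in>UNIV. P a s s' * policy us s a) = 1"
proof -
  have "(\<Sum>s'\<in>UNIV. \<Sum>a\<in>UNIV. P a s s' * policy us s a)
      = (\<Sum>a\<in>UNIV. \<Sum>s'\<in>UNIV. P a s s' * policy us s a)"
    by (rule sum.swap)
  also have "\<dots> = (\<Sum>a\<in>UNIV. policy us s a)"
    by (simp add: sum_distrib_right[symmetric] P_stoch)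
  also have "\<dots> = 1"
    by (rule sum_policy[OF us_pos])
  finally show ?thesis .
qed

lemma sum_K_policy: "(\<Sum>a\<in>UNIV. K a s s' * policy us s a)
    = (if s = s' then 1 else 0) - \<gamma> * (\<Sum>a\<in>UNIV. P a s s' * policy us s a)"
  using sum_policy[OF us_pos]
  by (simp add: Kmat_def left_diff_distrib sum_subtractf sum_distrib_left mult.assoc)

lemma abs_sum_K_mult_le: "\<bar>\<Sum>s'\<in>UNIV. K a s s' * f s'\<bar> \<le> l1_norm f"
  unfolding l1_norm_def
  by (rule order_trans[OF sum_abs sum_mono]) (simp add: abs_mult mult_left_le_one_le abs_K_le_one)

lemma abs_Kmat_transp_le: "\<bar>Kmat_transp \<gamma> P u s'\<bar> \<le> l1_norm (case_prod u)"
proof -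
  have "\<bar>Kmat_transp \<gamma> P u s'\<bar> \<le> (\<Sum>s\<in>UNIV. \<Sum>a\<in>UNIV. \<bar>K a s s' * u s a\<bar>)"
    unfolding Kmat_transp_def by (rule order_trans[OF sum_abs sum_mono]) (rule sum_abs)
  also have "\<dots> \<le> (\<Sum>s\<in>UNIV. \<Sum>a\<in>UNIV. \<bar>u s a\<bar>)"
    by (intro sum_mono) (simp add: abs_mult mult_left_le_one_le abs_K_le_one)
  finally show ?thesis
    by (simp add: l1_norm_case_prod)
qed

end

section \<open>The Lyapunov function along the flow\<close>

locale mdp_flow = mdp_saddle P r \<gamma> \<tau> \<alpha> vs us
  for P :: "'a::finite \<Rightarrow> 's::finite \<Rightarrow> 's \<Rightarrow> real" and r \<gamma> \<tau> \<alpha> vs us +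
  fixes c :: real and V :: "real \<Rightarrow> 's \<Rightarrow> real" and U :: "real \<Rightarrow> 's \<Rightarrow> 'a \<Rightarrow> real"
  assumes c: "0 < c" "c < 1"
    and U_pos: "\<And>t. t \<ge> 0 \<Longrightarrow> pos_u (U t)"
    and V_ode: "\<And>t s'. t \<ge> 0 \<Longrightarrow>
        ((\<lambda>t. V t s') has_real_derivative v_rhs \<alpha> \<gamma> P (V t) (U t) s') (at t within {0..})"
    and U_ode: "\<And>t s a. t \<ge> 0 \<Longrightarrow>
        ((\<lambda>t. U t s a) has_real_derivative u_rhs c \<gamma> \<tau> P r (V t) (U t) s a) (at t within {0..})"
begin

abbreviation dV where "dV t \<equiv> v_rhs \<alpha> \<gamma> P (V t) (U t)"

abbreviation dU where "dU t \<equiv> u_rhs c \<gamma> \<tau> P r (V t) (U t)"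

definition err_v where "err_v t s = V t s - vs s"

definition err_u where "err_u t s a = U t s a - us s a"

definition err_pi where "err_pi t s a = policy (U t) s a - policy us s a"

definition err_mass where "err_mass t s = utilde (U t) s - utilde us s"

definition err_target where "err_target t s = Kmat_transp \<gamma> P (err_u t) s / \<alpha>"

text \<open>The vector to which u_rhs applies the preconditioner diag(\<pi>) - c \<pi> \<pi>^T.\<close>

definition grad where
  "grad t s a = ln (policy (U t) s a) - 1 / \<tau> * (r s a - (\<Sum>s'\<in>UNIV. K a s s' * V t s'))"

lemma U_gt_0: "t \<ge> 0 \<Longrightarrow> 0 < U t s a"
  using U_pos unfolding pos_u_def by auto

lemma dV_eq: "dV t s = - err_v t s + err_target t s"
proof -
  have "err_target t s = (Kmat_transp \<gamma> P (U t) s - Kmat_transp \<gamma> P us s) / \<alpha>"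
    by (simp add: err_target_def err_u_def Kmat_transp_def right_diff_distrib sum_subtractf)
  also have "Kmat_transp \<gamma> P us s = \<alpha> * vs s"
    by (rule alpha_vs_eq[symmetric])
  finally have "err_target t s = Kmat_transp \<gamma> P (U t) s / \<alpha> - vs s"
    using alpha by (simp add: diff_divide_distrib)
  thus ?thesis
    by (simp add: v_rhs_def err_v_def Kmat_transp_def)
qed

lemma grad_eq:
  "grad t s a = ln (policy (U t) s a) - ln (policy us s a) + 1 / \<tau> * (\<Sum>s'\<in>UNIV. K a s s' * err_v t s')"
  using tau_ln_policy_eq[of s a] tau
  by (simp add: grad_def err_v_def right_diff_distrib sum_subtractf field_simps)

lemma dU_eq:
  assumes "t \<ge> 0"
  shows "dU t s a = - U t s a * (grad t s a - c * (\<Sum>b\<in>UNIV. policy (U t) s b * grad t s b))"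
proof -
  have "(\<Sum>b\<in>UNIV. ((if a = b then policy (U t) s a else 0) - c * policy (U t) s a * policy (U t) s b)
      * grad t s b) = policy (U t) s a * (grad t s a - c * (\<Sum>b\<in>UNIV. policy (U t) s b * grad t s b))"
    by (simp add: algebra_simps sum_subtractf sum_distrib_left if_distrib[of "\<lambda>x. x * _"] cong: if_cong)
  moreover have "utilde (U t) s * policy (U t) s a = U t s a"
    by (rule utilde_mult_policy[OF U_pos[OF assms]])
  ultimately show ?thesis
    unfolding u_rhs_def Let_def grad_def[symmetric] policy_def[symmetric] by (simp add: mult.assoc)
qed

lemma sum_dU_eq:
  assumes "t \<ge> 0"
  shows "(\<Sum>a\<in>UNIV. dU t s a) = - (1 - c) * utilde (U t) s * (\<Sum>b\<in>UNIV. policy (U t) s b * grad t s b)"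
proof -
  define S where "S = (\<Sum>b\<in>UNIV. policy (U t) s b * grad t s b)"
  have "dU t s a = - (U t s a * grad t s a) + c * S * U t s a" for a
    by (simp add: dU_eq[OF assms] S_def algebra_simps)
  hence "(\<Sum>a\<in>UNIV. dU t s a) = - (\<Sum>a\<in>UNIV. U t s a * grad t s a) + c * S * (\<Sum>a\<in>UNIV. U t s a)"
    by (simp add: sum_subtractf sum_distrib_left)
  also have "(\<Sum>a\<in>UNIV. U t s a * grad t s a) = utilde (U t) s * S"
    unfolding S_def sum_distrib_left
    by (intro sum.cong refl) (simp add: utilde_mult_policy[OF U_pos[OF assms], symmetric] mult.assoc)
  finally show ?thesis
    by (simp add: S_def utilde_def algebra_simps)
qed

text \<open>With this weight the rank-one part c \<pi> \<pi>^T of the preconditioner cancels in the derivative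
  of the Lyapunov function, see Lyap'_row_eq.\<close>

definition mass_weight where "mass_weight = c / (1 - c)"

lemma mass_weight_pos: "0 < mass_weight"
  using c by (simp add: mass_weight_def)

definition Lyap where
  "Lyap t = \<alpha> / 2 * sq_norm (err_v t)
     + \<tau> * ((\<Sum>s\<in>UNIV. \<Sum>a\<in>UNIV. gen_kl (us s a) (U t s a))
            + mass_weight * (\<Sum>s\<in>UNIV. gen_kl (utilde us s) (utilde (U t) s)))"

definition Lyap' where
  "Lyap' t = \<alpha> * (\<Sum>s\<in>UNIV. err_v t s * dV t s)
     + \<tau> * ((\<Sum>s\<in>UNIV. \<Sum>a\<in>UNIV. (1 - us s a / U t s a) * dU t s a)
            + mass_weight * (\<Sum>s\<in>UNIV. (1 - utilde us s / utilde (U t) s) * (\<Sum>a\<in>UNIV. dU t s a)))"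

lemma has_real_derivative_Lyap:
  assumes "t \<ge> 0"
  shows "(Lyap has_real_derivative Lyap' t) (at t within {0..})"
proof -
  have "((\<lambda>t. (V t s - vs s)\<^sup>2) has_real_derivative 2 * err_v t s * dV t s) (at t within {0..})" for s
    unfolding err_v_def by (auto intro!: derivative_eq_intros V_ode[OF assms])
  moreover have "((\<lambda>t. utilde (U t) s) has_real_derivative (\<Sum>a\<in>UNIV. dU t s a)) (at t within {0..})" for s
    unfolding utilde_def by (intro DERIV_sum U_ode[OF assms])
  ultimately have "(Lyap has_real_derivative \<alpha> / 2 * (\<Sum>s\<in>UNIV. 2 * err_v t s * dV t s)
     + \<tau> * ((\<Sum>s\<in>UNIV. \<Sum>a\<in>UNIV. (1 - us s a / U t s a) * dU t s a)
            + mass_weight * (\<Sum>s\<in>UNIV. (1 - utilde us s / utilde (U t) s) * (\<Sum>a\<in>UNIV. dU t s a))))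
      (at t within {0..})"
    unfolding Lyap_def[abs_def] sq_norm_def err_v_def
    by (intro DERIV_add DERIV_cmult DERIV_sum has_real_derivative_gen_kl U_ode[OF assms]
        U_gt_0[OF assms] utilde_pos[OF U_pos[OF assms]] utilde_pos[OF us_pos] us_pos[unfolded pos_u_def, rule_format])
  thus ?thesis
    by (simp add: Lyap'_def sum_distrib_left mult_ac)
qed

definition diss where
  "diss t = (\<Sum>s\<in>UNIV. \<Sum>a\<in>UNIV. err_u t s a * (ln (policy (U t) s a) - ln (policy us s a)))"

lemma Lyap'_row_eq:
  assumes "t \<ge> 0"
  shows "(\<Sum>a\<in>UNIV. (1 - us s a / U t s a) * dU t s a)
      + mass_weight * ((1 - utilde us s / utilde (U t) s) * (\<Sum>a\<in>UNIV. dU t s a))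
    = - (\<Sum>a\<in>UNIV. err_u t s a * grad t s a)"
proof -
  define S where "S = (\<Sum>b\<in>UNIV. policy (U t) s b * grad t s b)"
  have "(1 - us s a / U t s a) * dU t s a = - (err_u t s a * grad t s a) + c * S * err_u t s a" for a
    using U_gt_0[OF assms, of s a] by (simp add: dU_eq[OF assms] S_def err_u_def field_simps)
  hence "(\<Sum>a\<in>UNIV. (1 - us s a / U t s a) * dU t s a)
      = - (\<Sum>a\<in>UNIV. err_u t s a * grad t s a) + c * S * err_mass t s"
    by (simp add: sum.distrib sum_negf sum_distrib_left[symmetric] err_mass_def utilde_def
        err_u_def sum_subtractf)
  moreover have "mass_weight * ((1 - utilde us s / utilde (U t) s) * (\<Sum>a\<in>UNIV. dU t s a))
      = - c * S * err_mass t s"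
    using c utilde_pos[OF U_pos[OF assms], of s]
    by (simp add: sum_dU_eq[OF assms] S_def mass_weight_def err_mass_def field_simps)
  ultimately show ?thesis
    by simp
qed

lemma Lyap'_eq:
  assumes "t \<ge> 0"
  shows "Lyap' t = - \<alpha> * sq_norm (err_v t) - \<tau> * diss t"
proof -
  define X where "X = (\<Sum>s\<in>UNIV. \<Sum>a\<in>UNIV. err_u t s a * (\<Sum>s'\<in>UNIV. K a s s' * err_v t s'))"
  have "(\<Sum>s\<in>UNIV. err_v t s * dV t s)
      = (\<Sum>s\<in>UNIV. - (err_v t s)\<^sup>2 + Kmat_transp \<gamma> P (err_u t) s * err_v t s / \<alpha>)"
    by (simp add: dV_eq err_target_def power2_eq_square algebra_simps)
  hence "\<alpha> * (\<Sum>s\<in>UNIV. err_v t s * dV t s)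
      = - \<alpha> * sq_norm (err_v t) + (\<Sum>s\<in>UNIV. Kmat_transp \<gamma> P (err_u t) s * err_v t s)"
    using alpha by (simp add: sum_distrib_left right_diff_distrib sum_subtractf sum_negf sq_norm_def)
  also have "(\<Sum>s\<in>UNIV. Kmat_transp \<gamma> P (err_u t) s * err_v t s) = X"
    unfolding X_def by (rule sum_Kmat_transp_mult)
  finally have v_part: "\<alpha> * (\<Sum>s\<in>UNIV. err_v t s * dV t s) = - \<alpha> * sq_norm (err_v t) + X" .
  have "(\<Sum>s\<in>UNIV. \<Sum>a\<in>UNIV. (1 - us s a / U t s a) * dU t s a)
      + mass_weight * (\<Sum>s\<in>UNIV. (1 - utilde us s / utilde (U t) s) * (\<Sum>a\<in>UNIV. dU t s a))
    = - (\<Sum>s\<in>UNIV. \<Sum>a\<in>UNIV. err_u t s a * grad t s a)"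
    using Lyap'_row_eq[OF assms] by (simp add: sum.distrib[symmetric] sum_distrib_left sum_negf)
  also have "(\<Sum>s\<in>UNIV. \<Sum>a\<in>UNIV. err_u t s a * grad t s a) = diss t + X / \<tau>"
  proof -
    have "err_u t s a * grad t s a = err_u t s a * (ln (policy (U t) s a) - ln (policy us s a))
        + err_u t s a * (\<Sum>s'\<in>UNIV. K a s s' * err_v t s') / \<tau>" for s a
      by (simp add: grad_eq algebra_simps)
    thus ?thesis
      by (simp add: diss_def X_def sum.distrib sum_divide_distrib)
  qed
  finally have u_part: "(\<Sum>s\<in>UNIV. \<Sum>a\<in>UNIV. (1 - us s a / U t s a) * dU t s a)
      + mass_weight * (\<Sum>s\<in>UNIV. (1 - utilde us s / utilde (U t) s) * (\<Sum>a\<in>UNIV. dU t s a))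
    = - (diss t + X / \<tau>)" .
  have "\<tau> * (X / \<tau>) = X"
    using tau by simp
  thus ?thesis
    unfolding Lyap'_def v_part u_part by (simp add: algebra_simps)
qed

lemma diss_row_eq:
  assumes "t \<ge> 0"
  shows "(\<Sum>a\<in>UNIV. err_u t s a * (ln (policy (U t) s a) - ln (policy us s a)))
    = utilde (U t) s * (\<Sum>a\<in>UNIV. gen_kl (policy (U t) s a) (policy us s a))
      + utilde us s * (\<Sum>a\<in>UNIV. gen_kl (policy us s a) (policy (U t) s a))"
proof -
  have kl: "(\<Sum>a\<in>UNIV. gen_kl (policy u s a) (policy w s a))
      = (\<Sum>a\<in>UNIV. policy u s a * (ln (policy u s a) - ln (policy w s a)))"
    if "pos_u u" "pos_u w" for u w :: "'s \<Rightarrow> 'a \<Rightarrow> real"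
    using that by (intro sum_gen_kl_distributions policy_pos sum_policy)
  have "U t s a = utilde (U t) s * policy (U t) s a" "us s a = utilde us s * policy us s a" for a
    using utilde_mult_policy[OF U_pos[OF assms]] utilde_mult_policy[OF us_pos] by auto
  thus ?thesis
    unfolding kl[OF U_pos[OF assms] us_pos] kl[OF us_pos U_pos[OF assms]]
      sum_distrib_left sum.distrib[symmetric]
    by (intro sum.cong refl) (simp add: err_u_def algebra_simps)
qed

lemma diss_ge:
  assumes "t \<ge> 0"
  shows "(\<Sum>s\<in>UNIV. utilde us s * (\<Sum>a\<in>UNIV. gen_kl (policy us s a) (policy (U t) s a))) \<le> diss t"
  unfolding diss_def
proof (rule sum_mono)
  fix s
  have "0 \<le> utilde (U t) s * (\<Sum>a\<in>UNIV. gen_kl (policy (U t) s a) (policy us s a))"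
    using U_pos[OF assms] us_pos
    by (intro mult_nonneg_nonneg sum_nonneg gen_kl_nonneg policy_pos less_imp_le[OF utilde_pos])
  thus "utilde us s * (\<Sum>a\<in>UNIV. gen_kl (policy us s a) (policy (U t) s a))
      \<le> (\<Sum>a\<in>UNIV. err_u t s a * (ln (policy (U t) s a) - ln (policy us s a)))"
    by (simp add: diss_row_eq[OF assms])
qed

lemma diss_nonneg:
  assumes "t \<ge> 0"
  shows "0 \<le> diss t"
proof -
  have "0 \<le> (\<Sum>s\<in>UNIV. utilde us s * (\<Sum>a\<in>UNIV. gen_kl (policy us s a) (policy (U t) s a)))"
    using U_pos[OF assms] us_pos
    by (intro sum_nonneg mult_nonneg_nonneg gen_kl_nonneg policy_pos less_imp_le[OF utilde_pos])
  thus ?thesis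
    using diss_ge[OF assms] by linarith
qed

lemma Lyap_le_Lyap_0: "t \<ge> 0 \<Longrightarrow> Lyap t \<le> Lyap 0"
proof (rule nonincreasing_if_deriv_nonpos[OF has_real_derivative_Lyap])
  fix t :: real assume "t \<ge> 0"
  thus "Lyap' t \<le> 0"
    using mult_nonneg_nonneg[OF less_imp_le[OF tau] diss_nonneg[of t]]
      mult_nonneg_nonneg[OF less_imp_le[OF alpha] sq_norm_nonneg[of "err_v t"]]
    by (simp add: Lyap'_eq)
qed

lemma tau_gen_kl_le_Lyap:
  assumes "t \<ge> 0"
  shows "\<tau> * gen_kl (us s a) (U t s a) \<le> Lyap t"
proof -
  have kl_nonneg: "0 \<le> gen_kl (us s a) (U t s a)" for s a
    using us_pos U_gt_0[OF assms] by (intro gen_kl_nonneg) (auto simp: pos_u_def)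
  have "gen_kl (us s a) (U t s a) \<le> (\<Sum>s\<in>UNIV. \<Sum>a\<in>UNIV. gen_kl (us s a) (U t s a))"
    using member_le_sum[of a UNIV "\<lambda>a. gen_kl (us s a) (U t s a)"]
      member_le_sum[of s UNIV "\<lambda>s. \<Sum>a\<in>UNIV. gen_kl (us s a) (U t s a)"] kl_nonneg
    by (simp add: sum_nonneg)
  moreover have "0 \<le> mass_weight * (\<Sum>s\<in>UNIV. gen_kl (utilde us s) (utilde (U t) s))"
    using mass_weight_pos U_pos[OF assms] us_pos
    by (intro mult_nonneg_nonneg sum_nonneg gen_kl_nonneg utilde_pos) auto
  ultimately have "\<tau> * gen_kl (us s a) (U t s a) \<le> \<tau> * ((\<Sum>s\<in>UNIV. \<Sum>a\<in>UNIV. gen_kl (us s a) (U t s a))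
      + mass_weight * (\<Sum>s\<in>UNIV. gen_kl (utilde us s) (utilde (U t) s)))"
    using tau by (intro mult_left_mono) auto
  moreover have "0 \<le> \<alpha> / 2 * sq_norm (err_v t)"
    using alpha sq_norm_nonneg[of "err_v t"] by simp
  ultimately show ?thesis
    unfolding Lyap_def by linarith
qed

text \<open>Since Lyap decreases, gen_kl (us s a) (U t s a) stays below kl_bound, which confines U t
  to [umin, umax] by gen_kl_le_imp_le and gen_kl_le_imp_ge.\<close>

definition kl_bound where "kl_bound = Lyap 0 / \<tau>"

definition umax where "umax = 2 * (kl_bound + Max (range (case_prod us)))"

definition umin where "umin = Min (range (\<lambda>(s, a). us s a * exp (- (kl_bound + us s a) / us s a)))"

definition pmin where "pmin = umin / (real CARD('a) * umax)"

lemma gen_kl_le_kl_bound: "t \<ge> 0 \<Longrightarrow> gen_kl (us s a) (U t s a) \<le> kl_bound"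
  using tau_gen_kl_le_Lyap[of t s a] Lyap_le_Lyap_0[of t] tau
  by (simp add: kl_bound_def pos_le_divide_eq mult.commute)

lemma kl_bound_nonneg: "0 \<le> kl_bound"
  using gen_kl_le_kl_bound[of 0] gen_kl_nonneg[OF us_gt_0 U_gt_0] by (meson order.refl order_trans)

lemma us_le_max: "us s a \<le> Max (range (case_prod us))"
  using rangeI[of "case_prod us" "(s, a)"] by (intro Max_ge) auto

lemma kl_bound_us_le_umax: "2 * (kl_bound + us s a) \<le> umax"
  using us_le_max[of s a] by (simp add: umax_def)

lemma us_le_umax: "us s a \<le> umax"
proof (rule order_trans[OF _ kl_bound_us_le_umax])
  show "us s a \<le> 2 * (kl_bound + us s a)"
    using kl_bound_nonneg us_gt_0[of s a] by simp
qed

lemma U_le_umax: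
  assumes "t \<ge> 0"
  shows "U t s a \<le> umax"
  by (rule order_trans[OF gen_kl_le_imp_le kl_bound_us_le_umax])
     (use us_gt_0 U_gt_0[OF assms] gen_kl_le_kl_bound[OF assms] in auto)

lemma umin_le: "umin \<le> us s a * exp (- (kl_bound + us s a) / us s a)"
  unfolding umin_def
  using rangeI[of "\<lambda>(s, a). us s a * exp (- (kl_bound + us s a) / us s a)" "(s, a)"]
  by (intro Min_le) auto

lemma umin_le_U: "t \<ge> 0 \<Longrightarrow> umin \<le> U t s a"
  using gen_kl_le_imp_ge[OF us_gt_0 U_gt_0 gen_kl_le_kl_bound, of t s a] umin_le[of s a] by simp

lemma umin_le_us: "umin \<le> us s a"
proof -
  have "- (kl_bound + us s a) / us s a \<le> 0"
    using kl_bound_nonneg us_gt_0[of s a] by (intro divide_nonpos_pos) auto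
  hence "us s a * exp (- (kl_bound + us s a) / us s a) \<le> us s a"
    using us_gt_0[of s a] by (simp add: mult_le_cancel_left1)
  thus ?thesis
    using umin_le[of s a] by simp
qed

lemma umin_pos: "0 < umin"
  unfolding umin_def using us_gt_0 by (subst Min_gr_iff) auto

lemma umax_pos: "0 < umax"
  using us_le_umax us_gt_0 by (meson order_less_le_trans)

lemma pmin_pos: "0 < pmin"
  using umin_pos umax_pos by (simp add: pmin_def)

lemma pmin_le_policy_U: "t \<ge> 0 \<Longrightarrow> pmin \<le> policy (U t) s a"
  unfolding pmin_def using umin_pos U_pos umin_le_U U_le_umax by (intro policy_ge) auto

lemma pmin_le_policy_us: "pmin \<le> policy us s a"
  unfolding pmin_def using umin_pos us_pos umin_le_us us_le_umax by (intro policy_ge) auto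

lemma diss_lower:
  assumes "t \<ge> 0"
  shows "umin / 4 * sq_norm (case_prod (err_pi t)) \<le> diss t"
proof -
  have "umin / 4 * sq_norm (case_prod (err_pi t))
      = (\<Sum>s\<in>UNIV. umin * (\<Sum>a\<in>UNIV. (policy us s a - policy (U t) s a)\<^sup>2 / 4))"
    by (simp add: sq_norm_case_prod err_pi_def sum_distrib_left sum_divide_distrib power2_commute)
  also have "\<dots> \<le> (\<Sum>s\<in>UNIV. utilde us s * (\<Sum>a\<in>UNIV. gen_kl (policy us s a) (policy (U t) s a)))"
  proof (intro sum_mono mult_mono)
    fix s a
    show "(policy us s a - policy (U t) s a)\<^sup>2 / 4 \<le> gen_kl (policy us s a) (policy (U t) s a)"
      using sq_diff_le_gen_kl[of "policy us s a" "policy (U t) s a" 1] U_pos[OF assms] us_pos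
      by (simp add: policy_pos policy_le_one)
    show "umin \<le> utilde us s"
      by (rule order_trans[OF umin_le_us le_utilde[OF us_pos]])
  qed (use utilde_pos[OF us_pos] in \<open>auto intro: less_imp_le sum_nonneg\<close>)
  also have "\<dots> \<le> diss t"
    by (rule diss_ge[OF assms])
  finally show ?thesis .
qed

lemma Lyap'_le:
  assumes "t \<ge> 0"
  shows "Lyap' t \<le> - \<alpha> * sq_norm (err_v t) - \<tau> * umin / 4 * sq_norm (case_prod (err_pi t))"
  using mult_left_mono[OF diss_lower[OF assms] less_imp_le[OF tau]]
  by (simp add: Lyap'_eq[OF assms] mult.assoc)

lemma Lyap_lower:
  assumes "t \<ge> 0"
  shows "\<alpha> / 2 * sq_norm (err_v t) + \<tau> / (4 * umax) * sq_norm (case_prod (err_u t)) \<le> Lyap t"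
proof -
  have "(err_u t s a)\<^sup>2 / (4 * umax) \<le> gen_kl (us s a) (U t s a)" for s a
    using sq_diff_le_gen_kl[OF us_gt_0 U_gt_0[OF assms] us_le_umax U_le_umax[OF assms], of s a] umax_pos
    by (simp add: err_u_def power2_commute pos_divide_le_eq mult.commute)
  hence "sq_norm (case_prod (err_u t)) / (4 * umax) \<le> (\<Sum>s\<in>UNIV. \<Sum>a\<in>UNIV. gen_kl (us s a) (U t s a))"
    by (simp add: sq_norm_case_prod sum_divide_distrib sum_mono)
  moreover have "0 \<le> mass_weight * (\<Sum>s\<in>UNIV. gen_kl (utilde us s) (utilde (U t) s))"
    using mass_weight_pos U_pos[OF assms] us_pos
    by (intro mult_nonneg_nonneg sum_nonneg gen_kl_nonneg utilde_pos) auto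
  ultimately have "\<tau> * (sq_norm (case_prod (err_u t)) / (4 * umax))
      \<le> \<tau> * ((\<Sum>s\<in>UNIV. \<Sum>a\<in>UNIV. gen_kl (us s a) (U t s a))
        + mass_weight * (\<Sum>s\<in>UNIV. gen_kl (utilde us s) (utilde (U t) s)))"
    using tau by (intro mult_left_mono) auto
  thus ?thesis
    by (simp add: Lyap_def)
qed

lemma sum_gen_kl_mass_le:
  assumes "t \<ge> 0"
  shows "(\<Sum>s\<in>UNIV. gen_kl (utilde us s) (utilde (U t) s))
    \<le> real CARD('a) / umin * sq_norm (case_prod (err_u t))"
proof -
  have "gen_kl (utilde us s) (utilde (U t) s) \<le> real CARD('a) / umin * sq_norm (err_u t s)" for s
  proof -
    have "umin \<le> utilde (U t) s"
      by (rule order_trans[OF umin_le_U[OF assms] le_utilde[OF U_pos[OF assms]]])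
    have "\<bar>utilde (U t) s - utilde us s\<bar> \<le> l1_norm (err_u t s)"
      using sum_abs[of "err_u t s" UNIV] by (simp add: utilde_def err_u_def l1_norm_def sum_subtractf)
    hence "(utilde (U t) s - utilde us s)\<^sup>2 \<le> (l1_norm (err_u t s))\<^sup>2"
      by (metis abs_ge_zero power2_abs power_mono)
    also have "\<dots> \<le> real CARD('a) * sq_norm (err_u t s)"
      by (rule l1_norm_sq_le)
    finally have "(utilde us s - utilde (U t) s)\<^sup>2 / utilde (U t) s \<le> real CARD('a) * sq_norm (err_u t s) / umin"
      using \<open>umin \<le> utilde (U t) s\<close> umin_pos
      by (simp add: power2_commute frac_le sq_norm_nonneg)
    thus ?thesis
      using gen_kl_le_sq_div[OF utilde_pos[OF us_pos] utilde_pos[OF U_pos[OF assms]], of s s] by simp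
  qed
  hence "(\<Sum>s\<in>UNIV. gen_kl (utilde us s) (utilde (U t) s))
      \<le> (\<Sum>s\<in>UNIV. real CARD('a) / umin * sq_norm (err_u t s))"
    by (rule sum_mono)
  thus ?thesis
    unfolding sq_norm_case_prod by (simp add: sq_norm_def sum_distrib_left sum_divide_distrib)
qed

lemma Lyap_upper:
  assumes "t \<ge> 0"
  shows "Lyap t \<le> \<alpha> / 2 * sq_norm (err_v t)
    + \<tau> * (1 + mass_weight * real CARD('a)) / umin * sq_norm (case_prod (err_u t))"
proof -
  have "gen_kl (us s a) (U t s a) \<le> (err_u t s a)\<^sup>2 / umin" for s a
  proof -
    have "(us s a - U t s a)\<^sup>2 / U t s a \<le> (us s a - U t s a)\<^sup>2 / umin"
      using umin_le_U[OF assms, of s a] umin_pos by (intro divide_left_mono) auto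
    thus ?thesis
      using gen_kl_le_sq_div[OF us_gt_0[of s a] U_gt_0[OF assms, of s a]]
      by (simp add: err_u_def power2_commute)
  qed
  hence "(\<Sum>s\<in>UNIV. \<Sum>a\<in>UNIV. gen_kl (us s a) (U t s a)) \<le> sq_norm (case_prod (err_u t)) / umin"
    by (simp add: sq_norm_case_prod sum_divide_distrib sum_mono)
  moreover have "mass_weight * (\<Sum>s\<in>UNIV. gen_kl (utilde us s) (utilde (U t) s))
      \<le> mass_weight * (real CARD('a) / umin * sq_norm (case_prod (err_u t)))"
    using sum_gen_kl_mass_le[OF assms] mass_weight_pos by (intro mult_left_mono) auto
  ultimately have "\<tau> * ((\<Sum>s\<in>UNIV. \<Sum>a\<in>UNIV. gen_kl (us s a) (U t s a))
        + mass_weight * (\<Sum>s\<in>UNIV. gen_kl (utilde us s) (utilde (U t) s)))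
      \<le> \<tau> * (sq_norm (case_prod (err_u t)) / umin
        + mass_weight * (real CARD('a) / umin * sq_norm (case_prod (err_u t))))"
    using tau by (intro mult_left_mono) auto
  thus ?thesis
    by (simp add: Lyap_def algebra_simps add_divide_distrib)
qed

definition Psi where "Psi t = (\<Sum>s\<in>UNIV. err_v t s * err_target t s)"

definition err_target' where "err_target' t s = Kmat_transp \<gamma> P (dU t) s / \<alpha>"

definition Psi' where "Psi' t = (\<Sum>s\<in>UNIV. dV t s * err_target t s + err_v t s * err_target' t s)"

lemma has_real_derivative_Psi:
  assumes "t \<ge> 0"
  shows "(Psi has_real_derivative Psi' t) (at t within {0..})"
proof -
  have "((\<lambda>t. err_target t s) has_real_derivative err_target' t s) (at t within {0..})" for s
    unfolding err_target_def err_target'_def Kmat_transp_def err_u_def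
    using alpha by (auto intro!: derivative_eq_intros U_ode[OF assms] simp: mult.commute)
  moreover have "((\<lambda>t. err_v t s) has_real_derivative dV t s) (at t within {0..})" for s
    unfolding err_v_def by (auto intro!: derivative_eq_intros V_ode[OF assms])
  ultimately show ?thesis
    unfolding Psi_def[abs_def] Psi'_def by (auto intro!: derivative_eq_intros simp: mult.commute)
qed

lemma Psi'_eq: "Psi' t = - Psi t + sq_norm (err_target t) + (\<Sum>s\<in>UNIV. err_v t s * err_target' t s)"
  by (simp add: Psi'_def Psi_def dV_eq sq_norm_def power2_eq_square algebra_simps sum.distrib
      sum_subtractf)

lemma abs_Psi_le: "\<bar>Psi t\<bar> \<le> (sq_norm (err_v t) + sq_norm (err_target t)) / 2"
  unfolding Psi_def by (rule abs_inner_le_sq_norm)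

lemma sq_norm_err_target_le:
  "sq_norm (err_target t) \<le> real CARD('s) ^ 2 * real CARD('a) / \<alpha>\<^sup>2 * sq_norm (case_prod (err_u t))"
proof -
  have "(err_target t s)\<^sup>2 \<le> real CARD('s) * real CARD('a) / \<alpha>\<^sup>2 * sq_norm (case_prod (err_u t))"
    for s
  proof -
    have "(err_target t s)\<^sup>2 \<le> (l1_norm (case_prod (err_u t)) / \<alpha>)\<^sup>2"
      using abs_Kmat_transp_le[of "err_u t" s] alpha
      by (simp add: err_target_def abs_le_square_iff[symmetric] divide_right_mono)
    also have "\<dots> \<le> real CARD('s) * real CARD('a) / \<alpha>\<^sup>2 * sq_norm (case_prod (err_u t))"
      using l1_norm_sq_le_card_prod[of "err_u t"] alpha
      by (simp add: power_divide divide_right_mono)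
    finally show ?thesis .
  qed
  hence "sq_norm (err_target t)
      \<le> (\<Sum>s\<in>(UNIV :: 's set). real CARD('s) * real CARD('a) / \<alpha>\<^sup>2 * sq_norm (case_prod (err_u t)))"
    unfolding sq_norm_def[of "err_target t"] by (rule sum_mono)
  thus ?thesis
    by (simp add: power2_eq_square algebra_simps)
qed

definition grad_bound where
  "grad_bound t = l1_norm (case_prod (err_pi t)) / pmin + l1_norm (err_v t) / \<tau>"

lemma abs_grad_le:
  assumes "t \<ge> 0"
  shows "\<bar>grad t s a\<bar> \<le> grad_bound t"
proof -
  have "\<bar>ln (policy (U t) s a) - ln (policy us s a)\<bar> \<le> \<bar>err_pi t s a\<bar> / pmin"
    using abs_ln_diff_le[OF pmin_pos pmin_le_policy_U[OF assms] pmin_le_policy_us]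
    by (simp add: err_pi_def)
  also have "\<dots> \<le> l1_norm (case_prod (err_pi t)) / pmin"
    using abs_le_l1_norm[of "case_prod (err_pi t)" "(s, a)"] pmin_pos by (simp add: divide_right_mono)
  finally have "\<bar>ln (policy (U t) s a) - ln (policy us s a)\<bar> \<le> l1_norm (case_prod (err_pi t)) / pmin" .
  moreover have "\<bar>1 / \<tau> * (\<Sum>s'\<in>UNIV. K a s s' * err_v t s')\<bar> \<le> l1_norm (err_v t) / \<tau>"
    using abs_sum_K_mult_le[of a s "err_v t"] tau by (simp add: abs_mult divide_right_mono)
  ultimately show ?thesis
    unfolding grad_eq grad_bound_def by linarith
qed

lemma abs_dU_le:
  assumes "t \<ge> 0"
  shows "\<bar>dU t s a\<bar> \<le> 2 * umax * grad_bound t"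
proof -
  define S where "S = (\<Sum>b\<in>UNIV. policy (U t) s b * grad t s b)"
  have "\<bar>S\<bar> \<le> (\<Sum>b\<in>UNIV. policy (U t) s b * grad_bound t)"
    unfolding S_def using policy_pos[OF U_pos[OF assms]] abs_grad_le[OF assms]
    by (intro order_trans[OF sum_abs sum_mono]) (simp add: abs_mult mult_left_mono less_imp_le)
  hence "\<bar>S\<bar> \<le> grad_bound t"
    using sum_policy[OF U_pos[OF assms]] by (simp add: sum_distrib_right[symmetric])
  hence "\<bar>grad t s a - c * S\<bar> \<le> 2 * grad_bound t"
    using abs_grad_le[OF assms, of s a] c abs_mult[of c S] mult_left_le_one_le[of "\<bar>S\<bar>" c]
    by (smt (verit) abs_ge_zero)
  hence "U t s a * \<bar>grad t s a - c * S\<bar> \<le> umax * (2 * grad_bound t)"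
    using U_gt_0[OF assms] U_le_umax[OF assms] umax_pos by (intro mult_mono) (auto intro: less_imp_le)
  thus ?thesis
    using U_gt_0[OF assms, of s a] by (simp add: dU_eq[OF assms] S_def[symmetric] abs_mult)
qed

lemma abs_err_target'_le:
  assumes "t \<ge> 0"
  shows "\<bar>err_target' t s\<bar> \<le> real CARD('s) * real CARD('a) * (2 * umax * grad_bound t) / \<alpha>"
proof -
  have "l1_norm (case_prod (dU t)) \<le> (\<Sum>s\<in>(UNIV :: 's set). \<Sum>a\<in>(UNIV :: 'a set). 2 * umax * grad_bound t)"
    unfolding l1_norm_case_prod by (intro sum_mono abs_dU_le[OF assms])
  thus ?thesis
    using abs_Kmat_transp_le[of "dU t" s] alpha
    by (simp add: err_target'_def abs_divide divide_right_mono)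
qed

lemma abs_err_v_err_target'_le:
  obtains C where "0 \<le> C" and "\<And>t. t \<ge> 0 \<Longrightarrow>
    \<bar>\<Sum>s\<in>UNIV. err_v t s * err_target' t s\<bar> \<le> C * (sq_norm (err_v t) + sq_norm (case_prod (err_pi t)))"
proof
  define n where "n = real CARD('s) * real CARD('a)"
  define A0 where "A0 = n * (2 * umax) / \<alpha>"
  have "0 \<le> A0"
    using umax_pos alpha by (simp add: A0_def n_def)
  thus "0 \<le> A0 * (n * (1 / (2 * pmin) + 1 / \<tau>))"
    using pmin_pos tau by (simp add: n_def)
  fix t :: real assume "t \<ge> 0"
  define x y where "x = l1_norm (err_v t)" and "y = l1_norm (case_prod (err_pi t))"
  have "\<bar>err_target' t s\<bar> \<le> A0 * grad_bound t" for s
    using abs_err_target'_le[OF \<open>t \<ge> 0\<close>, of s] by (simp add: A0_def n_def mult.assoc)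
  hence "\<bar>\<Sum>s\<in>UNIV. err_v t s * err_target' t s\<bar> \<le> (\<Sum>s\<in>UNIV. \<bar>err_v t s\<bar> * (A0 * grad_bound t))"
    by (intro order_trans[OF sum_abs sum_mono]) (simp add: abs_mult mult_left_mono)
  also have "\<dots> = x * (A0 * grad_bound t)"
    by (simp add: x_def l1_norm_def sum_distrib_right)
  also have "\<dots> = A0 * (x * y / pmin + x\<^sup>2 / \<tau>)"
    by (simp add: grad_bound_def x_def[symmetric] y_def[symmetric] power2_eq_square algebra_simps)
  also have "\<dots> \<le> A0 * (n * (1 / (2 * pmin) + 1 / \<tau>) * (sq_norm (err_v t) + sq_norm (case_prod (err_pi t))))"
  proof (intro mult_left_mono[OF _ \<open>0 \<le> A0\<close>] young_mixed_le)
    have "real CARD('s) * sq_norm (err_v t) \<le> n * sq_norm (err_v t)"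
      unfolding n_def using sq_norm_nonneg[of "err_v t"]
      by (intro mult_right_mono) (auto simp: Suc_le_eq)
    thus "x\<^sup>2 \<le> n * sq_norm (err_v t)"
      using l1_norm_sq_le[of "err_v t"] by (simp add: x_def)
    show "y\<^sup>2 \<le> n * sq_norm (case_prod (err_pi t))"
      using l1_norm_sq_le_card_prod[of "err_pi t"] by (simp add: y_def n_def)
  qed (use pmin_pos tau sq_norm_nonneg in auto)
  finally show "\<bar>\<Sum>s\<in>UNIV. err_v t s * err_target' t s\<bar>
      \<le> A0 * (n * (1 / (2 * pmin) + 1 / \<tau>)) * (sq_norm (err_v t) + sq_norm (case_prod (err_pi t)))"
    by (simp add: mult.assoc)
qed

lemma err_u_eq:
  assumes "t \<ge> 0"
  shows "err_u t s a = err_mass t s * policy us s a + utilde (U t) s * err_pi t s a"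
  using utilde_mult_policy[OF U_pos[OF assms], of s a] utilde_mult_policy[OF us_pos, of s a]
  by (simp add: err_u_def err_mass_def err_pi_def algebra_simps)

lemma alpha_err_target_eq:
  assumes "t \<ge> 0"
  shows "\<alpha> * err_target t s' = err_mass t s'
    - \<gamma> * (\<Sum>s\<in>UNIV. err_mass t s * (\<Sum>a\<in>UNIV. P a s s' * policy us s a))
    + (\<Sum>s\<in>UNIV. \<Sum>a\<in>UNIV. K a s s' * (utilde (U t) s * err_pi t s a))"
proof -
  have "\<alpha> * err_target t s' = Kmat_transp \<gamma> P (err_u t) s'"
    using alpha by (simp add: err_target_def)
  also have "\<dots> = (\<Sum>s\<in>UNIV. err_mass t s * (\<Sum>a\<in>UNIV. K a s s' * policy us s a))
      + (\<Sum>s\<in>UNIV. \<Sum>a\<in>UNIV. K a s s' * (utilde (U t) s * err_pi t s a))"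
    by (simp add: Kmat_transp_def err_u_eq[OF assms] algebra_simps sum.distrib sum_distrib_left)
  also have "(\<Sum>s\<in>UNIV. err_mass t s * (\<Sum>a\<in>UNIV. K a s s' * policy us s a))
      = err_mass t s' - \<gamma> * (\<Sum>s\<in>UNIV. err_mass t s * (\<Sum>a\<in>UNIV. P a s s' * policy us s a))"
  proof -
    have "(\<Sum>s\<in>UNIV. err_mass t s * (\<Sum>a\<in>UNIV. K a s s' * policy us s a))
        = (\<Sum>s\<in>UNIV. (if s = s' then err_mass t s else 0)
            - \<gamma> * (err_mass t s * (\<Sum>a\<in>UNIV. P a s s' * policy us s a)))"
      by (intro sum.cong) (auto simp: sum_K_policy right_diff_distrib)
    thus ?thesis
      by (simp add: sum_subtractf sum_distrib_left)
  qed
  finally show ?thesis .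
qed

lemma abs_sum_K_utilde_err_pi_le:
  assumes "t \<ge> 0"
  shows "\<bar>\<Sum>s\<in>UNIV. \<Sum>a\<in>UNIV. K a s s' * (utilde (U t) s * err_pi t s a)\<bar>
    \<le> real CARD('a) * umax * l1_norm (case_prod (err_pi t))"
proof -
  have "\<bar>K a s s' * (utilde (U t) s * err_pi t s a)\<bar> \<le> real CARD('a) * umax * \<bar>err_pi t s a\<bar>" for s a
  proof -
    have "utilde (U t) s \<le> real CARD('a) * umax"
      using U_le_umax[OF assms] by (intro utilde_le_card_mult)
    hence "\<bar>K a s s'\<bar> * (utilde (U t) s * \<bar>err_pi t s a\<bar>) \<le> 1 * (real CARD('a) * umax * \<bar>err_pi t s a\<bar>)"
      using abs_K_le_one utilde_pos[OF U_pos[OF assms], of s]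
      by (intro mult_mono mult_right_mono) auto
    thus ?thesis
      using utilde_pos[OF U_pos[OF assms], of s] by (simp add: abs_mult)
  qed
  hence "\<bar>\<Sum>s\<in>UNIV. \<Sum>a\<in>UNIV. K a s s' * (utilde (U t) s * err_pi t s a)\<bar>
      \<le> (\<Sum>s\<in>UNIV. \<Sum>a\<in>UNIV. real CARD('a) * umax * \<bar>err_pi t s a\<bar>)"
    by (intro order_trans[OF sum_abs sum_mono] order_trans[OF sum_abs sum_mono])
  thus ?thesis
    by (simp add: l1_norm_case_prod sum_distrib_left)
qed

text \<open>The contraction factor \<gamma> < 1 of the transition operator lets the mass error be
  recovered from the target error and the policy error.\<close>

lemma l1_err_mass_le:
  assumes "t \<ge> 0"
  shows "(1 - \<gamma>) * l1_norm (err_mass t)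
    \<le> \<alpha> * l1_norm (err_target t) + real CARD('s) * (real CARD('a) * umax * l1_norm (case_prod (err_pi t)))"
proof -
  define w where "w s s' = (\<Sum>a\<in>UNIV. P a s s' * policy us s a)" for s s'
  define R where "R = real CARD('a) * umax * l1_norm (case_prod (err_pi t))"
  have w_nonneg: "0 \<le> w s s'" for s s'
    unfolding w_def using P_nonneg policy_pos[OF us_pos] by (intro sum_nonneg mult_nonneg_nonneg) (auto intro: less_imp_le)
  have "\<bar>err_mass t s'\<bar> \<le> \<alpha> * \<bar>err_target t s'\<bar> + \<gamma> * (\<Sum>s\<in>UNIV. \<bar>err_mass t s\<bar> * w s s') + R" for s'
  proof -
    define S where "S = (\<Sum>s\<in>UNIV. err_mass t s * w s s')"
    define Q where "Q = (\<Sum>s\<in>UNIV. \<Sum>a\<in>UNIV. K a s s' * (utilde (U t) s * err_pi t s a))"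
    have "err_mass t s' = \<alpha> * err_target t s' + \<gamma> * S - Q"
      using alpha_err_target_eq[OF assms, of s'] by (simp add: S_def Q_def w_def)
    moreover have "\<bar>x + y - q\<bar> \<le> \<bar>x\<bar> + \<bar>y\<bar> + \<bar>q\<bar>" for x y q :: real
      by linarith
    ultimately have "\<bar>err_mass t s'\<bar> \<le> \<alpha> * \<bar>err_target t s'\<bar> + \<gamma> * \<bar>S\<bar> + \<bar>Q\<bar>"
      using alpha gamma by (metis abs_mult abs_of_nonneg abs_of_pos)
    moreover have "\<bar>S\<bar> \<le> (\<Sum>s\<in>UNIV. \<bar>err_mass t s\<bar> * w s s')"
      unfolding S_def using w_nonneg by (intro order_trans[OF sum_abs]) (simp add: abs_mult)
    moreover have "\<bar>Q\<bar> \<le> R"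
      unfolding Q_def R_def by (rule abs_sum_K_utilde_err_pi_le[OF assms])
    ultimately show ?thesis
      using gamma mult_left_mono[of "\<bar>S\<bar>" "\<Sum>s\<in>UNIV. \<bar>err_mass t s\<bar> * w s s'" \<gamma>] by linarith
  qed
  hence "l1_norm (err_mass t) \<le> (\<Sum>s'\<in>UNIV. \<alpha> * \<bar>err_target t s'\<bar> + \<gamma> * (\<Sum>s\<in>UNIV. \<bar>err_mass t s\<bar> * w s s') + R)"
    unfolding l1_norm_def by (rule sum_mono)
  also have "\<dots> = \<alpha> * l1_norm (err_target t) + \<gamma> * l1_norm (err_mass t) + real CARD('s) * R"
  proof -
    have "(\<Sum>s'\<in>UNIV. \<Sum>s\<in>UNIV. \<bar>err_mass t s\<bar> * w s s') = (\<Sum>s\<in>UNIV. \<bar>err_mass t s\<bar> * (\<Sum>s'\<in>UNIV. w s s'))"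
      by (subst sum.swap) (simp add: sum_distrib_left)
    also have "\<dots> = l1_norm (err_mass t)"
      using sum_P_policy by (simp add: w_def l1_norm_def)
    finally show ?thesis
      by (simp add: sum.distrib sum_distrib_left[symmetric] l1_norm_def)
  qed
  finally show ?thesis
    by (simp add: R_def algebra_simps)
qed

lemma l1_err_u_le:
  assumes "t \<ge> 0"
  shows "l1_norm (case_prod (err_u t)) \<le> l1_norm (err_mass t) + real CARD('a) * umax * l1_norm (case_prod (err_pi t))"
proof -
  have "\<bar>err_u t s a\<bar> \<le> \<bar>err_mass t s\<bar> * policy us s a + real CARD('a) * umax * \<bar>err_pi t s a\<bar>" for s a
  proof -
    have "utilde (U t) s \<le> real CARD('a) * umax"
      using U_le_umax[OF assms] by (intro utilde_le_card_mult)
    thus ?thesis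
      unfolding err_u_eq[OF assms] using policy_pos[OF us_pos, of s a] utilde_pos[OF U_pos[OF assms], of s]
      by (intro order_trans[OF abs_triangle_ineq add_mono]) (auto simp: abs_mult intro: mult_right_mono)
  qed
  hence "l1_norm (case_prod (err_u t))
      \<le> (\<Sum>s\<in>UNIV. \<Sum>a\<in>UNIV. \<bar>err_mass t s\<bar> * policy us s a + real CARD('a) * umax * \<bar>err_pi t s a\<bar>)"
    unfolding l1_norm_case_prod by (intro sum_mono)
  thus ?thesis
    using sum_policy[OF us_pos] unfolding l1_norm_case_prod
    by (simp add: sum.distrib sum_distrib_left[symmetric] l1_norm_def)
qed

lemma l1_err_u_le_target:
  assumes "t \<ge> 0"
  shows "l1_norm (case_prod (err_u t)) \<le> ((\<alpha> + real CARD('s) * real CARD('a) * umax) / (1 - \<gamma>)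
      + real CARD('a) * umax) * (l1_norm (err_target t) + l1_norm (case_prod (err_pi t)))"
proof -
  define K0 z d where "K0 = real CARD('s) * real CARD('a) * umax"
    and "z = l1_norm (err_target t)" and "d = l1_norm (case_prod (err_pi t))"
  have "0 \<le> z" "0 \<le> d" "0 \<le> K0"
    using umax_pos by (simp_all add: z_def d_def K0_def l1_norm_nonneg)
  have "\<alpha> * z + K0 * d \<le> (\<alpha> + K0) * (z + d)"
    using \<open>0 \<le> z\<close> \<open>0 \<le> d\<close> \<open>0 \<le> K0\<close> alpha by (simp add: algebra_simps)
  moreover have "(1 - \<gamma>) * l1_norm (err_mass t) \<le> \<alpha> * z + K0 * d"
    using l1_err_mass_le[OF assms] by (simp add: z_def d_def K0_def mult.assoc)
  ultimately have "l1_norm (err_mass t) \<le> (\<alpha> + K0) / (1 - \<gamma>) * (z + d)"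
    using gamma by (simp add: pos_le_divide_eq mult.commute)
  moreover have "real CARD('a) * umax * d \<le> real CARD('a) * umax * (z + d)"
    using \<open>0 \<le> z\<close> umax_pos by (intro mult_left_mono) auto
  ultimately show ?thesis
    using l1_err_u_le[OF assms] unfolding K0_def z_def d_def by (simp add: algebra_simps)
qed

lemma sq_norm_err_u_le:
  obtains C where "0 < C" and "\<And>t. t \<ge> 0 \<Longrightarrow>
    sq_norm (case_prod (err_u t)) \<le> C * (sq_norm (err_target t) + sq_norm (case_prod (err_pi t)))"
proof
  define n where "n = real CARD('s) * real CARD('a)"
  define C6 where "C6 = (\<alpha> + n * umax) / (1 - \<gamma>) + real CARD('a) * umax"
  have "1 \<le> CARD('s) * CARD('a)"
    by (simp add: Suc_le_eq)
  hence "1 \<le> n"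
    unfolding n_def by (metis of_nat_1 of_nat_le_iff of_nat_mult)
  moreover have "0 < C6"
    using alpha gamma umax_pos \<open>1 \<le> n\<close> by (simp add: C6_def add_pos_nonneg)
  ultimately show "0 < 2 * C6\<^sup>2 * n"
    by simp
  fix t :: real assume "t \<ge> 0"
  define z d where "z = l1_norm (err_target t)" and "d = l1_norm (case_prod (err_pi t))"
  have "sq_norm (case_prod (err_u t)) \<le> (l1_norm (case_prod (err_u t)))\<^sup>2"
    by (rule sq_norm_le_l1_norm_sq)
  also have "\<dots> \<le> (C6 * (z + d))\<^sup>2"
    using l1_err_u_le_target[OF \<open>t \<ge> 0\<close>] l1_norm_nonneg
    by (intro power_mono) (simp_all add: C6_def n_def z_def d_def mult.assoc)
  also have "\<dots> \<le> C6\<^sup>2 * (2 * (z\<^sup>2 + d\<^sup>2))"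
  proof -
    have "(z + d)\<^sup>2 \<le> 2 * (z\<^sup>2 + d\<^sup>2)"
      using sum_squares_bound[of z d] by (simp add: power2_sum)
    thus ?thesis
      by (simp add: power_mult_distrib mult_left_mono)
  qed
  also have "z\<^sup>2 + d\<^sup>2 \<le> n * (sq_norm (err_target t) + sq_norm (case_prod (err_pi t)))"
  proof -
    have "real CARD('s) * sq_norm (err_target t) \<le> n * sq_norm (err_target t)"
      unfolding n_def using sq_norm_nonneg[of "err_target t"]
      by (intro mult_right_mono) (auto simp: Suc_le_eq)
    hence "z\<^sup>2 \<le> n * sq_norm (err_target t)"
      using l1_norm_sq_le[of "err_target t"] unfolding z_def by linarith
    moreover have "d\<^sup>2 \<le> n * sq_norm (case_prod (err_pi t))"
      using l1_norm_sq_le_card_prod[of "err_pi t"] by (simp add: d_def n_def)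
    ultimately show ?thesis
      unfolding distrib_left by (rule add_mono)
  qed
  finally show "sq_norm (case_prod (err_u t))
      \<le> 2 * C6\<^sup>2 * n * (sq_norm (err_target t) + sq_norm (case_prod (err_pi t)))"
    by (simp add: mult_left_mono mult.assoc)
qed

lemma strict_lyapunov:
  obtains W :: "real \<Rightarrow> real" and \<kappa> m where "\<kappa> > 0" "m > 0"
    and "\<And>t. t \<ge> 0 \<Longrightarrow> W t \<le> W 0 * exp (- \<kappa> * t)"
    and "\<And>t. t \<ge> 0 \<Longrightarrow> m * (sq_norm (err_v t) + sq_norm (case_prod (err_u t))) \<le> W t"
proof -
  obtain A where "0 \<le> A" and A: "\<And>t. t \<ge> 0 \<Longrightarrow>
      \<bar>\<Sum>s\<in>UNIV. err_v t s * err_target' t s\<bar> \<le> A * (sq_norm (err_v t) + sq_norm (case_prod (err_pi t)))"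
    by (rule abs_err_v_err_target'_le) (rule that)
  obtain C where "0 < C" and C: "\<And>t. t \<ge> 0 \<Longrightarrow>
      sq_norm (case_prod (err_u t)) \<le> C * (sq_norm (err_target t) + sq_norm (case_prod (err_pi t)))"
    by (rule sq_norm_err_u_le) (rule that)
  show ?thesis
  proof (rule cross_term_lyapunov[where \<beta> = "\<tau> * umin / 4" and B = "real CARD('s) ^ 2 * real CARD('a) / \<alpha>\<^sup>2"
        and lo = "\<tau> / (4 * umax)" and hi = "\<tau> * (1 + mass_weight * real CARD('a)) / umin",
        OF alpha _ \<open>0 \<le> A\<close> _ \<open>0 < C\<close>])
    show "0 < \<tau> * umin / 4" "0 \<le> real CARD('s) ^ 2 * real CARD('a) / \<alpha>\<^sup>2" "0 < \<tau> / (4 * umax)"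
      "0 \<le> \<tau> * (1 + mass_weight * real CARD('a)) / umin"
      using tau umin_pos umax_pos mass_weight_pos by auto
    fix \<epsilon> \<kappa> m :: real
    assume "0 < \<epsilon>" "0 < \<kappa>" "0 < m" and key: "\<And>E D Z U L L' \<Psi> \<Psi>'. 0 \<le> E \<Longrightarrow> 0 \<le> D \<Longrightarrow> 0 \<le> Z \<Longrightarrow>
      0 \<le> U \<Longrightarrow> L' \<le> - \<alpha> * E - \<tau> * umin / 4 * D \<Longrightarrow> \<Psi>' \<ge> - \<Psi> + Z - A * (E + D) \<Longrightarrow>
      \<bar>\<Psi>\<bar> \<le> (E + Z) / 2 \<Longrightarrow> Z \<le> real CARD('s) ^ 2 * real CARD('a) / \<alpha>\<^sup>2 * U \<Longrightarrow>
      U \<le> C * (Z + D) \<Longrightarrow> \<alpha> / 2 * E + \<tau> / (4 * umax) * U \<le> L \<Longrightarrow>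
      L \<le> \<alpha> / 2 * E + \<tau> * (1 + mass_weight * real CARD('a)) / umin * U \<Longrightarrow>
      L' - \<epsilon> * \<Psi>' \<le> - \<kappa> * (L - \<epsilon> * \<Psi>) \<and> m * (E + U) \<le> L - \<epsilon> * \<Psi>"
    define W where "W t = Lyap t - \<epsilon> * Psi t" for t
    have "Lyap' t - \<epsilon> * Psi' t \<le> - \<kappa> * W t
        \<and> m * (sq_norm (err_v t) + sq_norm (case_prod (err_u t))) \<le> W t" if "t \<ge> 0" for t
      unfolding W_def
    proof (rule key[OF sq_norm_nonneg sq_norm_nonneg sq_norm_nonneg sq_norm_nonneg Lyap'_le[OF that] _
          abs_Psi_le sq_norm_err_target_le C[OF that] Lyap_lower[OF that] Lyap_upper[OF that]])
      show "- Psi t + sq_norm (err_target t) - A * (sq_norm (err_v t) + sq_norm (case_prod (err_pi t)))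
          \<le> Psi' t"
        using A[OF that] by (simp add: Psi'_eq)
    qed
    moreover have "(W has_real_derivative Lyap' t - \<epsilon> * Psi' t) (at t within {0..})" if "t \<ge> 0" for t
      unfolding W_def[abs_def]
      by (intro DERIV_diff DERIV_cmult has_real_derivative_Lyap has_real_derivative_Psi that)
    ultimately show ?thesis
      using that[of \<kappa> m W] exp_decay_if_deriv_le[of W "\<lambda>t. Lyap' t - \<epsilon> * Psi' t" \<kappa>]
        \<open>\<kappa> > 0\<close> \<open>m > 0\<close> by blast
  qed
qed

lemma exponential_convergence:
  "\<exists>\<kappa> C. \<kappa> > 0 \<and> (\<forall>t\<ge>0.
     (\<Sum>s\<in>UNIV. \<bar>V t s - vs s\<bar>) + (\<Sum>s\<in>UNIV. \<Sum>a\<in>UNIV. \<bar>U t s a - us s a\<bar>) \<le> C * exp (- \<kappa> * t))"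
proof -
  obtain W :: "real \<Rightarrow> real" and \<kappa> m where "\<kappa> > 0" "m > 0"
    and decay: "\<And>t. t \<ge> 0 \<Longrightarrow> W t \<le> W 0 * exp (- \<kappa> * t)"
    and lower: "\<And>t. t \<ge> 0 \<Longrightarrow> m * (sq_norm (err_v t) + sq_norm (case_prod (err_u t))) \<le> W t"
    by (rule strict_lyapunov) (rule that)
  define n where "n = real CARD('s) * real CARD('a)"
  define C where "C = sqrt (2 * n * W 0 / m)"
  have "0 \<le> m * (sq_norm (err_v 0) + sq_norm (case_prod (err_u 0)))"
    using \<open>m > 0\<close> by (simp add: sq_norm_nonneg)
  hence "0 \<le> 2 * n * W 0 / m"
    using lower[of 0] \<open>m > 0\<close> by (simp add: n_def)
  show ?thesis
  proof (intro exI conjI allI impI)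
    show "\<kappa> / 2 > 0"
      using \<open>\<kappa> > 0\<close> by simp
    fix t :: real assume "t \<ge> 0"
    define x y where "x = l1_norm (err_v t)" and "y = l1_norm (case_prod (err_u t))"
    have "(x + y)\<^sup>2 \<le> 2 * (x\<^sup>2 + y\<^sup>2)"
      using sum_squares_bound[of x y] by (simp add: power2_sum)
    also have "\<dots> \<le> 2 * n * (sq_norm (err_v t) + sq_norm (case_prod (err_u t)))"
    proof -
      have "real CARD('s) * sq_norm (err_v t) \<le> n * sq_norm (err_v t)"
        unfolding n_def using sq_norm_nonneg[of "err_v t"] by (intro mult_right_mono) (auto simp: Suc_le_eq)
      hence "x\<^sup>2 + y\<^sup>2 \<le> n * sq_norm (err_v t) + n * sq_norm (case_prod (err_u t))"
        using l1_norm_sq_le[of "err_v t"] l1_norm_sq_le_card_prod[of "err_u t"]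
        unfolding x_def y_def n_def by linarith
      thus ?thesis
        by (simp add: algebra_simps)
    qed
    also have "\<dots> \<le> 2 * n * (W 0 * exp (- \<kappa> * t) / m)"
      using lower[OF \<open>t \<ge> 0\<close>] decay[OF \<open>t \<ge> 0\<close>] \<open>m > 0\<close>
      by (intro mult_left_mono) (simp_all add: pos_le_divide_eq mult.commute n_def)
    also have "\<dots> = (C * exp (- (\<kappa> / 2) * t))\<^sup>2"
      using \<open>0 \<le> 2 * n * W 0 / m\<close> by (simp add: C_def power_mult_distrib exp_double[symmetric])
    finally have "x + y \<le> C * exp (- (\<kappa> / 2) * t)"
      by (rule power2_le_imp_le) (simp add: C_def \<open>0 \<le> 2 * n * W 0 / m\<close>)
    thus "(\<Sum>s\<in>UNIV. \<bar>V t s - vs s\<bar>) + (\<Sum>s\<in>UNIV. \<Sum>a\<in>UNIV. \<bar>U t s a - us s a\<bar>)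
        \<le> C * exp (- (\<kappa> / 2) * t)"
      unfolding x_def y_def l1_norm_case_prod by (simp add: l1_norm_def err_v_def err_u_def)
  qed
qed

end

theorem theorem3p4:
  fixes P :: "'a::finite \<Rightarrow> 's::finite \<Rightarrow> 's \<Rightarrow> real"
    and r :: "'s \<Rightarrow> 'a \<Rightarrow> real"
    and \<gamma> \<tau> \<alpha> c :: real
    and vs :: "'s \<Rightarrow> real" and us :: "'s \<Rightarrow> 'a \<Rightarrow> real"
    and V :: "real \<Rightarrow> 's \<Rightarrow> real" and U :: "real \<Rightarrow> 's \<Rightarrow> 'a \<Rightarrow> real"
  assumes P_nonneg: "\<And>a s s'. P a s s' \<ge> 0"
    and P_stoch: "\<And>a s. (\<Sum>s'\<in>UNIV. P a s s') = 1"
    and r_nonneg: "\<And>s a. r s a \<ge> 0"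
    and gamma: "0 < \<gamma>" "\<gamma> < 1"
    and tau: "\<tau> > 0"
    and alpha: "\<alpha> > 0"
    and c: "0 < c" "c < 1"
    and saddle: "is_saddle \<alpha> \<gamma> \<tau> P r vs us"
    and U_pos: "\<And>t. t \<ge> 0 \<Longrightarrow> pos_u (U t)"
    and V_ode: "\<And>t s'. t \<ge> 0 \<Longrightarrow>
        ((\<lambda>t. V t s') has_real_derivative v_rhs \<alpha> \<gamma> P (V t) (U t) s') (at t within {0..})"
    and U_ode: "\<And>t s a. t \<ge> 0 \<Longrightarrow>
        ((\<lambda>t. U t s a) has_real_derivative u_rhs c \<gamma> \<tau> P r (V t) (U t) s a) (at t within {0..})"
  shows "\<exists>\<kappa> C. \<kappa> > 0 \<and> (\<forall>t\<ge>0.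
           (\<Sum>s\<in>UNIV. \<bar>V t s - vs s\<bar>) + (\<Sum>s\<in>UNIV. \<Sum>a\<in>UNIV. \<bar>U t s a - us s a\<bar>)
             \<le> C * exp (- \<kappa> * t))"
proof -
  interpret mdp_flow P r \<gamma> \<tau> \<alpha> vs us c V U
    using gamma by unfold_locales (auto intro: P_nonneg P_stoch tau alpha saddle c U_pos V_ode U_ode)
  show ?thesis
    by (rule exponential_convergence)
qed

end
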